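(* Let $0=t_0<t_1<\dots<t_k=T<\infty$, $\epsilon\in(0,1)$, $\alpha_0\in[\epsilon,1/\epsilon]$ a constant, and for $j=1,\dots,k-1$ let $\alpha_j$ be measurable functions on $\mathfrak N$ with values in $[\epsilon,1/\epsilon]$. Define $$\dot y(N,s)=\alpha_0\mathbf 1_{(0,t_1]}(s)+\sum_{j=1}^{k-1}\alpha_j(N^{t_j})\mathbf 1_{(t_j,t_{j+1}]}(s)+\mathbf 1_{(T,\infty)}(s),$$ where $N^{a}$ denotes $N$ stopped at time $a$. Then the map $\mathbf Y$ is invertible (both left and right invertible with respect to $\pi$).
   Context: $\mathfrak N$ denotes the set of locally finite simple configurations on $(0,\infty)$, identified with counting paths; $N$ is the canonical process, $\pi$ the unit rate Poisson law. $y(N,t)=\int_0^t\dot y(N,s)ds$, $y^*(N,t)=\inf\{s:y(N,s)>t\}$, and $\mathbf Y:\mathfrak N\to\mathfrak N$ is $N\mapsto Y$ with $Y(t)=N(y^*(N,t))$. $\mathbf Y$ is left invertible if $\mathbf Y^\#\pi\ll\pi$ and there is a measurable $\mathbb Z$ with $\mathbb Z\circ\mathbf Y=\mathrm{Id}$ $\pi$-a.s.; right invertible if there is a measurable $\mathbb Z$ with $\mathbb Z^\#\pi\ll\pi$ and $\mathbf Y\circ\mathbb Z=\mathrm{Id}$ $\pi$-a.s.; invertible if both. *)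

theory Defs
  imports "HOL-Probability.Probability"
begin

text \<open>Configurations on (0,oo): locally finite (simple) subsets of (0,oo).
  The counting path of a configuration N is cnt N t = #(N \<inter> (0,t]).\<close>

definition nconf :: "real set set" where
  "nconf = {N. N \<subseteq> {0<..} \<and> (\<forall>t. finite (N \<inter> {0<..t}))}"

definition cnt :: "real set \<Rightarrow> real \<Rightarrow> nat" where
  "cnt N t = card (N \<inter> {0<..t})"

definition Nspace :: "real set measure" where
  "Nspace = sigma nconf {{N \<in> nconf. cnt N t = n} | t n. True}"

text \<open>Unit rate Poisson law: points are partial sums of iid Exp(1) variables.\<close>
definition arrivals :: "(nat \<Rightarrow> real) \<Rightarrow> real set" where
  "arrivals x = (if (\<forall>i. 0 < x i) \<and> filterlim (\<lambda>n. \<Sum>i\<le>n. x i) at_top sequentially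
                 then range (\<lambda>n. \<Sum>i\<le>n. x i) else {})"

definition poisson :: "real set measure" where
  "poisson = distr (PiM UNIV (\<lambda>_::nat. density lborel (exponential_density 1))) Nspace arrivals"

text \<open>Configuration whose counting path is F (the jump times of F).\<close>
definition conf_of :: "(real \<Rightarrow> nat) \<Rightarrow> real set" where
  "conf_of F = {t. 0 < t \<and> eventually (\<lambda>s. F s < F t) (at_left t)}"

definition stopped :: "real set \<Rightarrow> real \<Rightarrow> real set" where
  "stopped N a = N \<inter> {0<..a}"

definition ydot :: "(nat \<Rightarrow> real) \<Rightarrow> nat \<Rightarrow> real \<Rightarrow> (nat \<Rightarrow> real set \<Rightarrow> real)
                     \<Rightarrow> real set \<Rightarrow> real \<Rightarrow> real" where
  "ydot tt k a0 al N s =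
     a0 * indicator {0<..tt 1} s
     + (\<Sum>j\<in>{1..<k}. al j (stopped N (tt j)) * indicator {tt j<..tt (Suc j)} s)
     + indicator {tt k<..} s"

definition ytime :: "(nat \<Rightarrow> real) \<Rightarrow> nat \<Rightarrow> real \<Rightarrow> (nat \<Rightarrow> real set \<Rightarrow> real)
                     \<Rightarrow> real set \<Rightarrow> real \<Rightarrow> real" where
  "ytime tt k a0 al N t = integral {0..t} (ydot tt k a0 al N)"

definition ystar :: "(nat \<Rightarrow> real) \<Rightarrow> nat \<Rightarrow> real \<Rightarrow> (nat \<Rightarrow> real set \<Rightarrow> real)
                     \<Rightarrow> real set \<Rightarrow> real \<Rightarrow> real" where
  "ystar tt k a0 al N t = Inf {s. 0 \<le> s \<and> ytime tt k a0 al N s > t}"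

definition Ymap :: "(nat \<Rightarrow> real) \<Rightarrow> nat \<Rightarrow> real \<Rightarrow> (nat \<Rightarrow> real set \<Rightarrow> real)
                     \<Rightarrow> real set \<Rightarrow> real set" where
  "Ymap tt k a0 al N = conf_of (\<lambda>t. cnt N (ystar tt k a0 al N t))"

definition left_invertible :: "(real set \<Rightarrow> real set) \<Rightarrow> bool" where
  "left_invertible Y \<longleftrightarrow> Y \<in> Nspace \<rightarrow>\<^sub>M Nspace
     \<and> absolutely_continuous poisson (distr poisson Nspace Y)
     \<and> (\<exists>Z \<in> Nspace \<rightarrow>\<^sub>M Nspace. AE N in poisson. Z (Y N) = N)"

definition right_invertible :: "(real set \<Rightarrow> real set) \<Rightarrow> bool" where
  "right_invertible Y \<longleftrightarrow>
     (\<exists>Z \<in> Nspace \<rightarrow>\<^sub>M Nspace. absolutely_continuous poisson (distr poisson Nspace Z)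
        \<and> (AE N in poisson. Y (Z N) = N))"

definition invertible :: "(real set \<Rightarrow> real set) \<Rightarrow> bool" where
  "invertible Y \<longleftrightarrow> left_invertible Y \<and> right_invertible Y"

end

theory Submission
  imports Defs
begin

text \<open>
  The rate \<open>ydot\<close> is a sum of constant pieces, so \<open>y(N,\<cdot>)\<close> is a piecewise linear time
  change and \<open>Y\<close> moves each point \<open>p\<close> of \<open>N\<close> to \<open>y(N,p)\<close>. Adding the piece on
  \<open>(t\<^sub>K, t\<^sub>K\<^sub>+\<^sub>1]\<close> composes the previous map with a warp of \<open>N\<close>: the identity up to
  \<open>t\<^sub>K\<close>, linear of slope \<open>\<alpha>\<^sub>K(N\<^sup>t\<^sup>K)\<close> on \<open>(t\<^sub>K, t\<^sub>K\<^sub>+\<^sub>1]\<close>, a translation afterwards.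
  The slope only depends on the points before \<open>t\<^sub>K\<close>, which the warp does not move, so the warp
  of slope \<open>1/\<alpha>\<^sub>K\<close> inverts it. Each warp is also nonsingular for the Poisson law: in terms of
  the i.i.d. \<open>Exp(1)\<close> interarrival times it is an adapted transform which, given the past, is
  piecewise affine with nonzero slopes in the current coordinate and which is eventually the
  identity, and such transforms preserve null sets. Composing the finitely many warps inverts
  \<open>Y\<close>.
\<close>

section \<open>Counting paths of configurations\<close>

lemma Nspace_gen_Pow: "{{N \<in> nconf. cnt N t = n} | t n. True} \<subseteq> Pow nconf"
  by auto

lemma space_Nspace[simp]: "space Nspace = nconf"
  unfolding Nspace_def using Nspace_gen_Pow by (rule space_measure_of)

lemma sets_Nspace: "sets Nspace = sigma_sets nconf {{N \<in> nconf. cnt N t = n} | t n. True}"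
  unfolding Nspace_def using Nspace_gen_Pow by (rule sets_measure_of)

lemma nconfD: "N \<in> nconf \<Longrightarrow> N \<subseteq> {0<..}" "N \<in> nconf \<Longrightarrow> finite (N \<inter> {0<..t})"
  by (auto simp: nconf_def)

lemma nconfI: "N \<subseteq> {0<..} \<Longrightarrow> (\<And>t. finite (N \<inter> {0<..t})) \<Longrightarrow> N \<in> nconf"
  by (auto simp: nconf_def)

lemma measurable_NspaceI:
  assumes "\<And>x. x \<in> space M \<Longrightarrow> f x \<in> nconf"
    and "\<And>t n. {x \<in> space M. cnt (f x) t = n} \<in> sets M"
  shows "f \<in> M \<rightarrow>\<^sub>M Nspace"
  unfolding Nspace_def
proof (rule measurable_measure_of[OF Nspace_gen_Pow])
  show "f \<in> space M \<rightarrow> nconf" using assms(1) by auto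
  fix y assume "y \<in> {{N \<in> nconf. cnt N t = n} | t n. True}"
  then obtain t n where y: "y = {N \<in> nconf. cnt N t = n}" by auto
  have "f -` y \<inter> space M = {x \<in> space M. cnt (f x) t = n}" using assms(1) y by auto
  then show "f -` y \<inter> space M \<in> sets M" using assms(2) by simp
qed

lemma measurable_cnt[measurable]: "(\<lambda>N. cnt N t) \<in> Nspace \<rightarrow>\<^sub>M count_space UNIV"
proof (subst measurable_count_space_eq2_countable, safe)
  fix n :: nat
  have "(\<lambda>N. cnt N t) -` {n} \<inter> space Nspace = {N \<in> nconf. cnt N t = n}" by auto
  also have "\<dots> \<in> sets Nspace" unfolding sets_Nspace by (rule sigma_sets.Basic) blast
  finally show "(\<lambda>N. cnt N t) -` {n} \<inter> space Nspace \<in> sets Nspace" .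
qed auto

lemma cnt_mono: "N \<in> nconf \<Longrightarrow> s \<le> t \<Longrightarrow> cnt N s \<le> cnt N t"
  unfolding cnt_def by (rule card_mono) (auto simp: nconf_def)

lemma cnt_less:
  assumes N: "N \<in> nconf" and p: "p \<in> N" and q: "q < p"
  shows "cnt N q < cnt N p"
proof -
  have p0: "0 < p" using nconfD(1)[OF N] p by auto
  have sub1: "N \<inter> {0<..q} \<subseteq> N \<inter> {0<..p}" using q by auto
  have ne: "N \<inter> {0<..q} \<noteq> N \<inter> {0<..p}"
  proof
    assume eq: "N \<inter> {0<..q} = N \<inter> {0<..p}"
    have "p \<in> N \<inter> {0<..p}" using p p0 by simp
    then have "p \<in> N \<inter> {0<..q}" using eq by simp
    then show False using q by simp
  qed
  have sub: "N \<inter> {0<..q} \<subset> N \<inter> {0<..p}" using sub1 ne by blast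
  show ?thesis unfolding cnt_def by (rule psubset_card_mono[OF nconfD(2)[OF N] sub])
qed

lemma cnt_right_constant:
  assumes N: "N \<in> nconf"
  shows "\<exists>d>0. \<forall>q. s \<le> q \<and> q < s + d \<longrightarrow> cnt N q = cnt N s"
proof -
  define F where "F = N \<inter> {s<..s+1}"
  have fin: "finite F" unfolding F_def
    using nconfD(1)[OF N] by (intro finite_subset[OF _ nconfD(2)[OF N, of "s+1"]]) auto
  define d where "d = Min (insert 1 ((\<lambda>p. p - s) ` F))"
  have dpos: "d > 0" unfolding d_def using fin by (subst Min_gr_iff) (auto simp: F_def)
  have dle: "\<And>p. p \<in> F \<Longrightarrow> d \<le> p - s" unfolding d_def using fin by (intro Min_le) auto
  have "\<forall>q. s \<le> q \<and> q < s + d \<longrightarrow> cnt N q = cnt N s"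
  proof (intro allI impI)
    fix q assume q: "s \<le> q \<and> q < s + d"
    have d1: "d \<le> 1" unfolding d_def using fin by (intro Min_le) auto
    have "N \<inter> {0<..q} = N \<inter> {0<..s}"
    proof safe
      fix p assume p: "p \<in> N" "p \<in> {0<..q}"
      show "p \<in> {0<..s}"
      proof (rule ccontr)
        assume "p \<notin> {0<..s}"
        then have "p \<in> F" using p q d1 by (auto simp: F_def)
        then have "d \<le> p - s" by (rule dle)
        then show False using p q by auto
      qed
    qed (use q in auto)
    then show "cnt N q = cnt N s" by (simp add: cnt_def)
  qed
  then show ?thesis using dpos by blast
qed

lemma cnt_le_iff_rat:
  assumes N: "N \<in> nconf"
  shows "cnt N s \<le> n \<longleftrightarrow> (\<exists>q\<in>\<rat>. s < q \<and> cnt N q \<le> n)"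
proof
  assume "cnt N s \<le> n"
  obtain d where d: "d > 0" "\<And>q. s \<le> q \<and> q < s + d \<Longrightarrow> cnt N q = cnt N s"
    using cnt_right_constant[OF N] by blast
  obtain q where q: "q \<in> \<rat>" "s < q" "q < s + d" using Rats_dense_in_real[of s "s+d"] d(1) by auto
  then show "\<exists>q\<in>\<rat>. s < q \<and> cnt N q \<le> n" using d(2)[of q] \<open>cnt N s \<le> n\<close> by auto
next
  assume "\<exists>q\<in>\<rat>. s < q \<and> cnt N q \<le> n"
  then obtain q where "s < q" "cnt N q \<le> n" by auto
  then show "cnt N s \<le> n" using cnt_mono[OF N, of s q] by simp
qed

lemma measurable_cnt_comp_le:
  assumes f[measurable]: "f \<in> M \<rightarrow>\<^sub>M Nspace" and g[measurable]: "g \<in> borel_measurable M"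
  shows "{x \<in> space M. cnt (f x) (g x) \<le> n} \<in> sets M"
proof -
  have fx: "x \<in> space M \<Longrightarrow> f x \<in> nconf" for x
    using measurable_space[OF f] by auto
  have "{x \<in> space M. cnt (f x) (g x) \<le> n} = (\<Union>q\<in>\<rat>. {x \<in> space M. g x < q \<and> cnt (f x) q \<le> n})"
    using cnt_le_iff_rat[OF fx] by auto
  also have "\<dots> \<in> sets M"
    by (intro sets.countable_UN'' countable_rat) measurable
  finally show ?thesis .
qed

lemma measurable_cnt_comp[measurable (raw)]:
  assumes f: "f \<in> M \<rightarrow>\<^sub>M Nspace" and g: "g \<in> borel_measurable M"
  shows "(\<lambda>x. cnt (f x) (g x)) \<in> M \<rightarrow>\<^sub>M count_space UNIV"
proof (subst measurable_count_space_eq2_countable, safe)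
  fix n :: nat
  have "(\<lambda>x. cnt (f x) (g x)) -` {n} \<inter> space M =
    {x \<in> space M. cnt (f x) (g x) \<le> n} - (if n = 0 then {} else {x \<in> space M. cnt (f x) (g x) \<le> n - 1})"
    by auto
  also have "\<dots> \<in> sets M"
    using measurable_cnt_comp_le[OF f g] by (intro sets.Diff) auto
  finally show "(\<lambda>x. cnt (f x) (g x)) -` {n} \<inter> space M \<in> sets M" .
qed auto

lemma measurable_NspaceI_cnt:
  assumes "\<And>x. x \<in> space M \<Longrightarrow> f x \<in> nconf"
    and "\<And>t. (\<lambda>x. cnt (f x) t) \<in> M \<rightarrow>\<^sub>M count_space UNIV"
  shows "f \<in> M \<rightarrow>\<^sub>M Nspace"
proof (rule measurable_NspaceI[OF assms(1)])
  fix t n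
  have "{x \<in> space M. cnt (f x) t = n} = (\<lambda>x. cnt (f x) t) -` {n} \<inter> space M" by auto
  then show "{x \<in> space M. cnt (f x) t = n} \<in> sets M"
    using measurable_sets[OF assms(2), of "{n}"] by simp
qed

lemma stopped_nconf: "N \<in> nconf \<Longrightarrow> stopped N a \<in> nconf"
  unfolding stopped_def nconf_def by (auto intro: finite_subset)

lemma cnt_stopped: "cnt (stopped N a) t = cnt N (min a t)"
  unfolding cnt_def stopped_def
  by (rule arg_cong[where f=card]) auto

lemma stopped_stopped: "b \<le> a \<Longrightarrow> stopped (stopped N a) b = stopped N b"
  unfolding stopped_def by auto

lemma measurable_stopped[measurable]: "(\<lambda>N. stopped N a) \<in> Nspace \<rightarrow>\<^sub>M Nspace"
  by (rule measurable_NspaceI_cnt) (auto simp: stopped_nconf cnt_stopped)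

lemma card_image_lessThan_Suc_Int:
  fixes F :: "nat \<Rightarrow> 'a" and n :: nat
  shows "card (F ` {..<Suc n} \<inter> J) =
   card (F ` {..<n} \<inter> J) + (if F n \<in> J \<and> (\<forall>i<n. F i \<noteq> F n) then 1 else 0)"
proof -
  have e: "F ` {..<Suc n} \<inter> J =
    (if F n \<in> J then insert (F n) (F ` {..<n} \<inter> J) else F ` {..<n} \<inter> J)"
    by (auto simp: lessThan_Suc)
  have h1: "F n \<in> F ` {..<n} \<longleftrightarrow> (\<exists>i<n. F i = F n)"
    by (metis (mono_tags) imageE imageI lessThan_iff)
  then have "F n \<in> F ` {..<n} \<inter> J \<longleftrightarrow> F n \<in> J \<and> \<not> (\<forall>i<n. F i \<noteq> F n)" by auto
  then show ?thesis unfolding e by (simp add: card_insert_if) (use h1 in blast)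
qed

lemma measurable_card_image_Int:
  fixes F :: "nat \<Rightarrow> 'a \<Rightarrow> real" and n :: nat
  assumes F[measurable]: "\<And>i. F i \<in> borel_measurable M"
  shows "(\<lambda>x. real (card ((\<lambda>i. F i x) ` {..<n} \<inter> {0<..t}))) \<in> borel_measurable M"
proof (induction n)
  case 0 then show ?case by simp
next
  case (Suc n)
  note [measurable] = Suc
  have "(\<lambda>x. real (card ((\<lambda>i. F i x) ` {..<Suc n} \<inter> {0<..t}))) =
    (\<lambda>x. real (card ((\<lambda>i. F i x) ` {..<n} \<inter> {0<..t})) +
       real (if F n x \<in> {0<..t} \<and> (\<forall>i<n. F i x \<noteq> F n x) then 1 else 0))"
    by (simp add: card_image_lessThan_Suc_Int[of "\<lambda>i. F i _"])
  also have "\<dots> \<in> borel_measurable M" by measurable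
  finally show ?case .
qed

lemma measurable_finite_points:
  fixes F :: "nat \<Rightarrow> 'a \<Rightarrow> real" and n :: nat
  assumes F[measurable]: "\<And>i. F i \<in> borel_measurable M"
  shows "(\<lambda>x. (\<lambda>i. F i x) ` {..<n} \<inter> {0<..}) \<in> M \<rightarrow>\<^sub>M Nspace"
proof (rule measurable_NspaceI)
  show "(\<lambda>i. F i x) ` {..<n} \<inter> {0<..} \<in> nconf" for x
    by (rule nconfI) (auto intro!: finite_Int disjI1)
  fix t m
  have c: "cnt ((\<lambda>i. F i x) ` {..<n} \<inter> {0<..}) t = card ((\<lambda>i. F i x) ` {..<n} \<inter> {0<..t})" for x
    unfolding cnt_def by (rule arg_cong[where f=card]) auto
  have [measurable]: "(\<lambda>x. real (card ((\<lambda>i. F i x) ` {..<n} \<inter> {0<..t}))) \<in> borel_measurable M"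
    by (rule measurable_card_image_Int[OF F])
  have "{x \<in> space M. cnt ((\<lambda>i. F i x) ` {..<n} \<inter> {0<..}) t = m} =
        {x \<in> space M. real (card ((\<lambda>i. F i x) ` {..<n} \<inter> {0<..t})) = real m}"
    unfolding c by simp
  also have "\<dots> \<in> sets M" by measurable
  finally show "{x \<in> space M. cnt ((\<lambda>i. F i x) ` {..<n} \<inter> {0<..}) t = m} \<in> sets M" .
qed

lemma cnt_nonpos: "t \<le> 0 \<Longrightarrow> cnt N t = 0"
  unfolding cnt_def by (subgoal_tac "N \<inter> {0<..t} = {}") auto

section \<open>Time changes of configurations\<close>

lemma conf_of_cnt:
  assumes N: "N \<in> nconf"
  shows "conf_of (cnt N) = N"
proof (rule set_eqI)
  fix t
  show "t \<in> conf_of (cnt N) \<longleftrightarrow> t \<in> N"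
  proof
    assume t: "t \<in> N"
    then have "0 < t" using nconfD(1)[OF N] by auto
    moreover have "eventually (\<lambda>s. cnt N s < cnt N t) (at_left t)"
      unfolding eventually_at_left_field using \<open>0 < t\<close>
        by (intro exI[of _ 0]) (auto intro: cnt_less[OF N t])
    ultimately show "t \<in> conf_of (cnt N)" by (simp add: conf_of_def)
  next
    assume "t \<in> conf_of (cnt N)"
    then have t0: "0 < t" and jump: "eventually (\<lambda>s. cnt N s < cnt N t) (at_left t)"
      by (auto simp: conf_of_def)
    show "t \<in> N"
    proof (rule ccontr)
      assume "t \<notin> N"
      define q where "q = Max (insert 0 (N \<inter> {0<..t}))"
      have fin: "finite (N \<inter> {0<..t})" by (rule nconfD(2)[OF N])
      have "q \<in> insert 0 (N \<inter> {0<..t})" unfolding q_def using fin by (intro Max_in) auto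
      then have "q < t" using \<open>t \<notin> N\<close> t0 by (cases "q = t") auto
      have le_q: "p \<le> q" if "p \<in> N \<inter> {0<..t}" for p unfolding q_def using fin that
        by (intro Max_ge) auto
      have "N \<inter> {0<..s} = N \<inter> {0<..t}" if "q < s" "s < t" for s
      proof
        show "N \<inter> {0<..t} \<subseteq> N \<inter> {0<..s}"
        proof
          fix p assume p: "p \<in> N \<inter> {0<..t}"
          then show "p \<in> N \<inter> {0<..s}" using le_q[OF p] that by auto
        qed
      qed (use that in auto)
      then have "eventually (\<lambda>s. cnt N s = cnt N t) (at_left t)"
        unfolding eventually_at_left_field cnt_def using \<open>q < t\<close> by (intro exI[of _ q]) auto
      with jump have "eventually (\<lambda>s::real. False) (at_left t)" by eventually_elim simp
      then show False by (simp add: trivial_limit_at_left_real)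
    qed
  qed
qed

definition time_change :: "(real \<Rightarrow> real) \<Rightarrow> bool" where
  "time_change h \<longleftrightarrow> h 0 = 0 \<and> (\<forall>s t. 0 \<le> s \<longrightarrow> s < t \<longrightarrow> h s < h t) \<and> (\<forall>y\<ge>0. \<exists>s\<ge>0. h s = y)"

lemma time_change_less_iff:
  "time_change h \<Longrightarrow> 0 \<le> s \<Longrightarrow> 0 \<le> t \<Longrightarrow> h s < h t \<longleftrightarrow> s < t"
  unfolding time_change_def by (metis less_linear order_less_asym)

lemma time_change_le_iff:
  "time_change h \<Longrightarrow> 0 \<le> s \<Longrightarrow> 0 \<le> t \<Longrightarrow> h s \<le> h t \<longleftrightarrow> s \<le> t"
  using time_change_less_iff[of h t s] by (simp add: not_less[symmetric])

lemma time_change_nonneg: "time_change h \<Longrightarrow> 0 \<le> s \<Longrightarrow> 0 \<le> h s"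
  using time_change_le_iff[of h 0 s] by (simp add: time_change_def)

lemma time_change_cong:
  assumes g: "time_change g" and h: "\<And>s. 0 \<le> s \<Longrightarrow> h s = g s"
  shows "time_change h"
  unfolding time_change_def
proof (intro conjI allI impI)
  show "h 0 = 0" using g h[of 0] by (simp add: time_change_def)
  show "h s < h t" if "0 \<le> s" "s < t" for s t using that g h[of s] h[of t]
    by (simp add: time_change_def)
  fix y :: real assume "0 \<le> y"
  then obtain s where "0 \<le> s" "g s = y" using g by (auto simp: time_change_def)
  then show "\<exists>s\<ge>0. h s = y" using h by auto
qed

lemma time_change_comp:
  assumes g: "time_change g" and f: "time_change f"
  shows "time_change (\<lambda>s. g (f s))"
  unfolding time_change_def
proof (intro conjI allI impI)
  show "g (f 0) = 0" using f g by (simp add: time_change_def)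
next
  fix s t :: real assume st: "0 \<le> s" "s < t"
  have "f s < f t" using f st by (simp add: time_change_def)
  moreover have "0 \<le> f s" "0 \<le> f t" using time_change_nonneg[OF f] st by auto
  ultimately show "g (f s) < g (f t)" using g by (simp add: time_change_def)
next
  fix y :: real assume "0 \<le> y"
  then obtain u where u: "0 \<le> u" "g u = y" using g by (auto simp: time_change_def)
  then obtain s where "0 \<le> s" "f s = u" using f by (auto simp: time_change_def)
  with u show "\<exists>s\<ge>0. g (f s) = y" by auto
qed

lemma time_change_Inf:
  assumes h: "time_change h" and s0: "0 \<le> s0"
  shows "Inf {s. 0 \<le> s \<and> h s > h s0} = s0"
proof -
  have "{s. 0 \<le> s \<and> h s > h s0} = {s0<..}"
    using time_change_less_iff[OF h s0] s0 by auto
  then show ?thesis by simp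
qed

lemma time_change_Inf_neg:
  assumes h: "time_change h" and t: "t < 0"
  shows "Inf {s. 0 \<le> s \<and> h s > t} = 0"
proof -
  have "{s. 0 \<le> s \<and> h s > t} = {0..}" using time_change_nonneg[OF h] t by force
  then show ?thesis by simp
qed

lemma
  assumes N: "N \<in> nconf" and h: "time_change h"
  shows time_change_image_nconf: "h ` N \<in> nconf"
    and cnt_time_change_image: "0 \<le> s \<Longrightarrow> cnt (h ` N) (h s) = cnt N s"
proof -
  have pos: "p \<in> N \<Longrightarrow> 0 < p" for p using nconfD(1)[OF N] by auto
  have h_pos: "p \<in> N \<Longrightarrow> 0 < h p" for p
    using time_change_less_iff[OF h, of 0 p] pos h by (auto simp: time_change_def)
  have eq: "h ` N \<inter> {0<..h s} = h ` (N \<inter> {0<..s})" if "0 \<le> s" for s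
    using time_change_le_iff[OF h _ that] pos h_pos by (auto simp: less_imp_le)
  have inj: "inj_on h N"
    by (rule inj_onI) (metis pos less_imp_le time_change_le_iff[OF h] order_antisym order_refl)
  show "h ` N \<in> nconf"
  proof (rule nconfI)
    show "h ` N \<subseteq> {0<..}" using h_pos by auto
    fix t
    show "finite (h ` N \<inter> {0<..t})"
    proof (cases "t < 0")
      case False
      then obtain s where "0 \<le> s" "h s = t" using h by (auto simp: time_change_def not_less)
      then show ?thesis using eq nconfD(2)[OF N] by auto
    qed auto
  qed
  show "cnt (h ` N) (h s) = cnt N s" if "0 \<le> s"
    unfolding cnt_def eq[OF that] by (rule card_image[OF inj_on_subset[OF inj]]) auto
qed

lemma conf_of_time_change:
  assumes N: "N \<in> nconf" and h: "time_change h"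
  shows "conf_of (\<lambda>t. cnt N (Inf {s. 0 \<le> s \<and> h s > t})) = h ` N"
proof -
  have "cnt N (Inf {s. 0 \<le> s \<and> h s > t}) = cnt (h ` N) t" for t
  proof (cases "t < 0")
    case True
    then show ?thesis using time_change_Inf_neg[OF h True] by (simp add: cnt_nonpos)
  next
    case False
    then obtain s where s: "0 \<le> s" "h s = t" using h by (auto simp: time_change_def not_less)
    then have "Inf {s. 0 \<le> s \<and> h s > t} = s" using time_change_Inf[OF h s(1)] by simp
    then show ?thesis using cnt_time_change_image[OF N h s(1)] s(2) by simp
  qed
  then have "(\<lambda>t. cnt N (Inf {s. 0 \<le> s \<and> h s > t})) = cnt (h ` N)" ..
  then show ?thesis using conf_of_cnt[OF time_change_image_nconf[OF N h]] by simp
qed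

section \<open>Streams of exponential variables\<close>

definition Exp1 :: "real measure" where "Exp1 = density lborel (exponential_density 1)"

abbreviation Exp1_streams :: "real stream measure" where "Exp1_streams \<equiv> stream_space Exp1"

lemma prob_space_Exp1: "prob_space Exp1"
  unfolding Exp1_def by (rule prob_space_exponential_density) simp

lemma space_Exp1[simp]: "space Exp1 = UNIV"
  and sets_Exp1[simp, measurable_cong]: "sets Exp1 = sets borel"
  by (auto simp: Exp1_def)

lemma space_Exp1_streams[simp]: "space Exp1_streams = UNIV"
  by (simp add: space_stream_space)

lemma stream_eqI_snth:
  assumes "\<And>n. s !! n = t !! n" shows "s = t"
proof -
  have "snth s = snth t" using assms by blast
  then show ?thesis by (subst stream_smap_nats[of s], subst stream_smap_nats[of t]) simp
qed

definition null_preserving :: "(real \<Rightarrow> real) \<Rightarrow> bool" where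
  "null_preserving g \<longleftrightarrow> g \<in> borel_measurable borel \<and> (\<forall>B \<in> null_sets Exp1. g -` B \<in> null_sets Exp1)"

lemma AE_null_preserving:
  assumes "null_preserving g" "AE x in Exp1. Q x"
  shows "AE t in Exp1. Q (g t)"
proof -
  obtain B where B: "{x \<in> space Exp1. \<not> Q x} \<subseteq> B" "B \<in> null_sets Exp1"
    using assms(2) unfolding eventually_ae_filter by auto
  have "g -` B \<in> null_sets Exp1" using assms(1) B(2) by (auto simp: null_preserving_def)
  then show ?thesis
    by (rule AE_I'[where N="g -` B"]) (use B(1) in auto)
qed

lemma null_sets_Exp1_iff: "B \<in> null_sets Exp1 \<longleftrightarrow> B \<in> sets borel \<and> (AE x in lborel. x \<in> B \<longrightarrow> x < 0)"
proof -
  have m: "(\<lambda>x. ennreal (exponential_density 1 x)) \<in> borel_measurable lborel"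
    by (simp add: exponential_density_def)
  have "(AE x in lborel. x \<in> B \<longrightarrow> ennreal (exponential_density 1 x) = 0) \<longleftrightarrow>
        (AE x in lborel. x \<in> B \<longrightarrow> x < 0)"
    by (intro AE_cong) (auto simp: exponential_density_def)
  then show ?thesis unfolding Exp1_def null_sets_density_iff[OF m] by simp
qed

lemma AE_lborel_affine:
  fixes Q :: "real \<Rightarrow> bool"
  assumes al: "\<alpha> \<noteq> 0" and Qm[measurable]: "Measurable.pred borel Q" and ae: "AE u in lborel. Q u"
  shows "AE v in lborel. Q (\<beta> + \<alpha> * v)"
proof -
  have "AE v in distr lborel borel (\<lambda>x. - \<beta> / \<alpha> + (1 / \<alpha>) * x). Q (\<beta> + \<alpha> * v)"
  proof (subst AE_distr_iff)
    show "AE x in lborel. Q (\<beta> + \<alpha> * (- \<beta> / \<alpha> + 1 / \<alpha> * x))"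
      using ae al by (simp add: field_simps)
  qed measurable
  then have A: "AE v in density (distr lborel borel (\<lambda>x. - \<beta> / \<alpha> + (1 / \<alpha>) * x)) (\<lambda>_. ennreal \<bar>1 / \<alpha>\<bar>).
      Q (\<beta> + \<alpha> * v)"
    by (subst AE_density) (auto elim: eventually_mono)
  have eq: "lborel = density (distr lborel borel (\<lambda>x. - \<beta> / \<alpha> + (1 / \<alpha>) * x)) (\<lambda>_. ennreal \<bar>1 / \<alpha>\<bar>)"
    by (rule lborel_real_affine) (use al in simp)
  show ?thesis apply (subst eq) by (rule A)
qed

lemma null_preservingI_piecewise_affine:
  assumes f[measurable]: "f \<in> borel_measurable borel" and P: "finite P" "\<And>\<kappa> \<alpha>. (\<kappa>, \<alpha>) \<in> P \<Longrightarrow> \<alpha> \<noteq> 0"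
    and nonneg: "\<And>v. 0 \<le> v \<Longrightarrow> 0 \<le> f v"
    and affine: "\<And>v. 0 \<le> v \<Longrightarrow> \<exists>(\<kappa>, \<alpha>)\<in>P. f v = \<kappa> + \<alpha> * v"
  shows "null_preserving f"
  unfolding null_preserving_def
proof safe
  fix B assume "B \<in> null_sets Exp1"
  then have B[measurable]: "B \<in> sets borel" and aeB: "AE u in lborel. u \<in> B \<longrightarrow> u < 0"
    unfolding null_sets_Exp1_iff by auto
  have "\<forall>(\<kappa>, \<alpha>)\<in>P. AE v in lborel. \<kappa> + \<alpha> * v \<in> B \<longrightarrow> \<kappa> + \<alpha> * v < 0"
    using P(2) by (auto intro!: AE_lborel_affine[OF _ _ aeB])
  then have "AE v in lborel. \<forall>(\<kappa>, \<alpha>)\<in>P. \<kappa> + \<alpha> * v \<in> B \<longrightarrow> \<kappa> + \<alpha> * v < 0"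
    using eventually_ball_finite[OF P(1)] by (simp add: case_prod_beta)
  then have "AE v in lborel. v \<in> f -` B \<longrightarrow> v < 0"
  proof eventually_elim
    case (elim v)
    show ?case
    proof (rule ccontr)
      assume "\<not> (v \<in> f -` B \<longrightarrow> v < 0)"
      then have "0 \<le> v" "f v \<in> B" by auto
      with affine[of v] elim nonneg[of v] show False by fastforce
    qed
  qed
  moreover have "f -` B \<in> sets borel" using measurable_sets[OF f B] by simp
  ultimately show "f -` B \<in> null_sets Exp1" unfolding null_sets_Exp1_iff by simp
qed simp

definition adapted :: "(real stream \<Rightarrow> real stream) \<Rightarrow> bool" where
  "adapted \<Phi> \<longleftrightarrow> (\<forall>n (x::real stream) y. stake n x = stake n y \<longrightarrow> stake n (\<Phi> x) = stake n (\<Phi> y))"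

definition null_preserving_coords :: "(real stream \<Rightarrow> real stream) \<Rightarrow> bool" where
  "null_preserving_coords \<Phi> \<longleftrightarrow>
     (\<forall>(l::real list) (xs::real stream). null_preserving (\<lambda>v. \<Phi> (l @- v ## xs) !! length l))"

lemma adapted_shd:
  assumes "adapted \<Phi>" shows "shd (\<Phi> (t ## xs)) = shd (\<Phi> (t ## ys))"
  using assms[unfolded adapted_def, rule_format, of 1 "t ## xs" "t ## ys"] by simp

lemma adapted_stl:
  assumes "adapted \<Phi>" shows "adapted (\<lambda>xs. stl (\<Phi> (t ## xs)))"
  unfolding adapted_def
proof (intro allI impI)
  fix n and xs ys :: "real stream" assume "stake n xs = stake n ys"
  then have "stake (Suc n) (t ## xs) = stake (Suc n) (t ## ys)" by simp
  then have "stake (Suc n) (\<Phi> (t ## xs)) = stake (Suc n) (\<Phi> (t ## ys))"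
    using assms unfolding adapted_def by blast
  then show "stake n (stl (\<Phi> (t ## xs))) = stake n (stl (\<Phi> (t ## ys)))"
    by simp
qed

lemma null_preserving_coords_stl:
  assumes "null_preserving_coords \<Phi>" shows "null_preserving_coords (\<lambda>xs. stl (\<Phi> (t ## xs)))"
  unfolding null_preserving_coords_def
proof (intro allI)
  fix l xs
  have "null_preserving (\<lambda>v. \<Phi> ((t # l) @- v ## xs) !! length (t # l))" using assms
    unfolding null_preserving_coords_def by blast
  then show "null_preserving (\<lambda>v. stl (\<Phi> (t ## l @- v ## xs)) !! length l)" by simp
qed

lemma null_preserving_coords_shd: "null_preserving_coords \<Phi> \<Longrightarrow> null_preserving (\<lambda>v. shd (\<Phi> (v ## xs)))"
  unfolding null_preserving_coords_def by (drule spec[of _ "[]"]) simp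

text \<open>Induction on \<open>m\<close>, disintegrating the first coordinate: the head of \<open>\<Phi> (t ## X)\<close>
  depends on \<open>t\<close> alone, through a null preserving map, and the tail is again such a transform.\<close>
lemma AE_adapted_transform_sdrop:
  assumes "\<Phi> \<in> Exp1_streams \<rightarrow>\<^sub>M Exp1_streams" "\<And>x. sdrop m (\<Phi> x) = sdrop m x"
    and "adapted \<Phi>" "null_preserving_coords \<Phi>"
    and P[measurable]: "Measurable.pred Exp1_streams P" and ae: "AE X in Exp1_streams. P X"
  shows "AE X in Exp1_streams. P (\<Phi> X)"
  using assms
proof (induction m arbitrary: \<Phi> P)
  case 0
  then show ?case by simp
next
  case (Suc m)
  interpret Exp1: prob_space Exp1 by (rule prob_space_Exp1)
  note [measurable] = Suc.prems(1) Suc.prems(5)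
  define g where "g t = shd (\<Phi> (t ## sconst 0))" for t
  have NPg: "null_preserving g" unfolding g_def by (rule null_preserving_coords_shd[OF Suc.prems(4)])
  have split: "\<Phi> (t ## X) = g t ## stl (\<Phi> (t ## X))" for t X
    using adapted_shd[OF Suc.prems(3)] unfolding g_def by (metis stream.collapse)
  have "AE x in Exp1. AE X in Exp1_streams. P (x ## X)"
    using Suc.prems(6) by (subst (asm) Exp1.AE_stream_space) auto
  then have "AE t in Exp1. AE X in Exp1_streams. P (g t ## X)" by (rule AE_null_preserving[OF NPg])
  then have "AE t in Exp1. AE X in Exp1_streams. P (\<Phi> (t ## X))"
  proof eventually_elim
    case (elim t)
    then have h: "AE X in Exp1_streams. P (g t ## X)" .
    have "AE X in Exp1_streams. P (g t ## stl (\<Phi> (t ## X)))"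
    proof (rule Suc.IH[where P="\<lambda>X. P (g t ## X)"])
      show "(\<lambda>xs. stl (\<Phi> (t ## xs))) \<in> Exp1_streams \<rightarrow>\<^sub>M Exp1_streams" by measurable
      show "sdrop m (stl (\<Phi> (t ## x))) = sdrop m x" for x
        using Suc.prems(2)[of "t ## x"] by simp
      show "adapted (\<lambda>xs. stl (\<Phi> (t ## xs)))" by (rule adapted_stl[OF Suc.prems(3)])
      show "null_preserving_coords (\<lambda>xs. stl (\<Phi> (t ## xs)))"
        by (rule null_preserving_coords_stl[OF Suc.prems(4)])
      show "Measurable.pred Exp1_streams (\<lambda>X. P (g t ## X))" by measurable
      show "AE X in Exp1_streams. P (g t ## X)" by (rule h)
    qed
    then show "AE X in Exp1_streams. P (\<Phi> (t ## X))" by (subst split) 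
  qed
  then show ?case by (subst Exp1.AE_stream_space) auto
qed

definition truncated :: "nat \<Rightarrow> (real stream \<Rightarrow> real stream) \<Rightarrow> real stream \<Rightarrow> real stream" where
  "truncated m \<Phi> X = stake m (\<Phi> X) @- sdrop m X"

lemma snth_truncated: "truncated m \<Phi> X !! n = (if n < m then \<Phi> X !! n else X !! n)"
  unfolding truncated_def by (simp add: shift_snth sdrop_snth)

lemma measurable_truncated:
  "\<Phi> \<in> Exp1_streams \<rightarrow>\<^sub>M Exp1_streams \<Longrightarrow> truncated m \<Phi> \<in> Exp1_streams \<rightarrow>\<^sub>M Exp1_streams"
  unfolding truncated_def by (rule measurable_shift[OF _ measurable_sdrop])

lemma adapted_truncated:
  assumes "adapted \<Phi>" shows "adapted (truncated m \<Phi>)"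
  unfolding adapted_def
proof (intro allI impI)
  fix n and x y :: "real stream" assume h: "stake n x = stake n y"
  have s: "stake n (\<Phi> x) = stake n (\<Phi> y)" using assms h unfolding adapted_def by blast
  have "truncated m \<Phi> x !! i = truncated m \<Phi> y !! i" if "i < n" for i
    using arg_cong[OF s, of "\<lambda>l. l ! i"] arg_cong[OF h, of "\<lambda>l. l ! i"] that
    by (simp add: snth_truncated)
  then show "stake n (truncated m \<Phi> x) = stake n (truncated m \<Phi> y)"
    by (intro nth_equalityI) auto
qed

lemma null_preserving_coords_truncated:
  assumes "null_preserving_coords \<Phi>" shows "null_preserving_coords (truncated m \<Phi>)"
  unfolding null_preserving_coords_def
proof (intro allI)
  fix l xs
  show "null_preserving (\<lambda>v. truncated m \<Phi> (l @- v ## xs) !! length l)"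
    using assms by (cases "length l < m")
      (simp_all add: snth_truncated null_preserving_def null_preserving_coords_def)
qed

lemma AE_adapted_transform:
  assumes Phi[measurable]: "\<Phi> \<in> Exp1_streams \<rightarrow>\<^sub>M Exp1_streams" and adapt: "adapted \<Phi>"
    and npc: "null_preserving_coords \<Phi>"
    and ev: "AE X in Exp1_streams. \<exists>m. \<forall>n\<ge>m. \<Phi> X !! n = X !! n"
    and P[measurable]: "Measurable.pred Exp1_streams P" and ae: "AE X in Exp1_streams. P X"
  shows "AE X in Exp1_streams. P (\<Phi> X)"
proof -
  have "AE X in Exp1_streams. P (truncated m \<Phi> X)" for m
    by (rule AE_adapted_transform_sdrop[where m=m, OF measurable_truncated[OF Phi] _
          adapted_truncated[OF adapt]
          null_preserving_coords_truncated[OF npc] P ae])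
       (simp add: truncated_def sdrop_shift)
  then have "AE X in Exp1_streams. \<forall>m. P (truncated m \<Phi> X)" by (simp add: AE_all_countable)
  then show ?thesis using ev
  proof eventually_elim
    case (elim X)
    then obtain m where m: "\<forall>n\<ge>m. \<Phi> X !! n = X !! n" by auto
    have "\<Phi> X = truncated m \<Phi> X" by (rule stream_eqI_snth) (use m in \<open>auto simp: snth_truncated\<close>)
    then show ?case using elim by simp
  qed
qed

section \<open>The Poisson law as partial sums\<close>

definition psum :: "real stream \<Rightarrow> nat \<Rightarrow> real" where "psum x n = (\<Sum>i\<le>n. x !! i)"

definition regular_stream :: "real stream \<Rightarrow> bool" where
  "regular_stream x \<longleftrightarrow> (\<forall>i. 0 < x !! i) \<and> (\<forall>M::nat. \<exists>n. real M \<le> psum x n)"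

definition stream_points :: "real stream \<Rightarrow> real set" where "stream_points x = arrivals (snth x)"

lemma psum_Suc: "psum x (Suc n) = psum x n + x !! Suc n"
  by (simp add: psum_def)

lemma strict_mono_psum:
  assumes "\<forall>i. 0 < x !! i" shows "strict_mono (psum x)"
proof (rule strict_monoI_Suc)
  fix n
  have "0 < x !! Suc n" using assms by blast
  then show "psum x n < psum x (Suc n)" by (simp add: psum_Suc del: snth.simps)
qed

lemma psum_pos: "\<forall>i. 0 < x !! i \<Longrightarrow> 0 < psum x n"
  unfolding psum_def by (rule sum_pos) auto

lemma filterlim_psum_iff:
  assumes pos: "\<forall>i. 0 < x !! i"
  shows "filterlim (\<lambda>n. \<Sum>i\<le>n. x !! i) at_top sequentially \<longleftrightarrow> (\<forall>M::nat. \<exists>n. real M \<le> psum x n)"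
proof
  assume "filterlim (\<lambda>n. \<Sum>i\<le>n. x !! i) at_top sequentially"
  then have "\<forall>Z. eventually (\<lambda>n. Z \<le> psum x n) sequentially" unfolding filterlim_at_top psum_def .
  then show "\<forall>M::nat. \<exists>n. real M \<le> psum x n"
    by (metis eventually_sequentially order_refl)
next
  assume h: "\<forall>M::nat. \<exists>n. real M \<le> psum x n"
  have mono: "mono (psum x)" using strict_mono_psum[OF pos] by (rule strict_mono_mono)
  have "\<forall>Z. eventually (\<lambda>n. Z \<le> psum x n) sequentially"
  proof
    fix Z :: real
    obtain M :: nat where "Z \<le> real M" using real_arch_simple by blast
    moreover obtain n0 where "real M \<le> psum x n0" using h by blast
    ultimately have "\<forall>n\<ge>n0. Z \<le> psum x n" using mono by (meson monoD order_trans)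
    then show "eventually (\<lambda>n. Z \<le> psum x n) sequentially" by (auto simp: eventually_sequentially)
  qed
  then show "filterlim (\<lambda>n. \<Sum>i\<le>n. x !! i) at_top sequentially" unfolding filterlim_at_top psum_def .
qed

lemma stream_points_eq: "stream_points x = (if regular_stream x then range (psum x) else {})"
proof (cases "\<forall>i. 0 < x !! i")
  case True
  then show ?thesis unfolding stream_points_def arrivals_def regular_stream_def
    using filterlim_psum_iff[OF True] by (auto simp: psum_def)
next
  case False
  then show ?thesis unfolding stream_points_def arrivals_def regular_stream_def by auto
qed

lemma finite_psum_le:
  assumes "regular_stream x" shows "finite {n. psum x n \<le> t}"
proof -
  obtain M :: nat where M: "t < real M" using reals_Archimedean2 by blast
  obtain n0 where n0: "real M \<le> psum x n0" using assms unfolding regular_stream_def by blast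
  have mono: "mono (psum x)" using assms unfolding regular_stream_def
    by (intro strict_mono_mono strict_mono_psum) auto
  have "{n. psum x n \<le> t} \<subseteq> {..<n0}"
  proof
    fix n assume "n \<in> {n. psum x n \<le> t}"
    then have "psum x n \<le> t" by simp
    then show "n \<in> {..<n0}" using M n0 monoD[OF mono, of n0 n] by (cases "n0 \<le> n") auto
  qed
  then show ?thesis by (rule finite_subset) simp
qed

lemma stream_points_nconf: "stream_points x \<in> nconf"
proof (cases "regular_stream x")
  case True
  have pos: "\<forall>i. 0 < x !! i" using True unfolding regular_stream_def by simp
  show ?thesis unfolding stream_points_eq using True
  proof (simp, intro nconfI)
    show "range (psum x) \<subseteq> {0<..}" using psum_pos[OF pos] by auto
    fix t
    have "range (psum x) \<inter> {0<..t} \<subseteq> psum x ` {n. psum x n \<le> t}" by auto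
    then show "finite (range (psum x) \<inter> {0<..t})"
      using finite_psum_le[OF True] by (meson finite_imageI finite_subset)
  qed
next
  case False
  then show ?thesis unfolding stream_points_eq by (simp add: nconf_def)
qed

lemma down_closed_eq_lessThan_card:
  fixes A :: "nat set"
  assumes "finite A" and down: "\<And>n k. n \<in> A \<Longrightarrow> k \<le> n \<Longrightarrow> k \<in> A"
  shows "A = {..<card A}"
proof (cases "A = {}")
  case False
  then have "A = {..Max A}" using assms by (auto intro: Max_ge Max_in)
  then show ?thesis by (metis card_atMost lessThan_Suc_atMost)
qed simp

lemma psum_le_iff_less_cnt:
  assumes g: "regular_stream x"
  shows "psum x n \<le> t \<longleftrightarrow> n < cnt (stream_points x) t"
proof -
  have pos: "\<forall>i. 0 < x !! i" using g unfolding regular_stream_def by simp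
  have sm: "strict_mono (psum x)" by (rule strict_mono_psum[OF pos])
  define A where "A = {n. psum x n \<le> t}"
  have "stream_points x \<inter> {0<..t} = psum x ` A"
    unfolding stream_points_eq A_def using g psum_pos[OF pos] by auto
  then have cnt: "cnt (stream_points x) t = card A"
    unfolding cnt_def using card_image[OF strict_mono_imp_inj_on[OF sm]] by simp
  have "A = {..<card A}"
  proof (rule down_closed_eq_lessThan_card)
    show "finite A" unfolding A_def by (rule finite_psum_le[OF g])
    show "k \<in> A" if "n \<in> A" "k \<le> n" for n k
      using that strict_mono_less_eq[OF sm, of k n] unfolding A_def by auto
  qed
  then have "n \<in> A \<longleftrightarrow> n < card A" by blast
  then show ?thesis unfolding cnt A_def by simp
qed

lemma measurable_psum[measurable]: "(\<lambda>x. psum x n) \<in> borel_measurable Exp1_streams"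
  unfolding psum_def by measurable

lemma measurable_regular_stream[measurable]: "Measurable.pred Exp1_streams regular_stream"
  unfolding regular_stream_def by measurable

lemma measurable_stream_points[measurable]: "stream_points \<in> Exp1_streams \<rightarrow>\<^sub>M Nspace"
proof (rule measurable_NspaceI_cnt)
  show "stream_points x \<in> nconf" for x by (rule stream_points_nconf)
  fix t
  have cnt_eq: "cnt (stream_points x) t = n \<longleftrightarrow>
      (regular_stream x \<and> (n = 0 \<or> psum x (n - 1) \<le> t) \<and> \<not> psum x n \<le> t) \<or> (\<not> regular_stream x \<and> n = 0)"
    for x n
  proof (cases "regular_stream x")
    case True
    then show ?thesis unfolding psum_le_iff_less_cnt[OF True] by (cases n) auto
  next
    case False
    then show ?thesis by (simp add: stream_points_eq cnt_def)
  qed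
  show "(\<lambda>x. cnt (stream_points x) t) \<in> Exp1_streams \<rightarrow>\<^sub>M count_space UNIV"
  proof (subst measurable_count_space_eq2_countable, safe)
    fix n :: nat
    have "(\<lambda>x. cnt (stream_points x) t) -` {n} \<inter> space Exp1_streams = {x \<in> space Exp1_streams.
        (regular_stream x \<and> (n = 0 \<or> psum x (n - 1) \<le> t) \<and> \<not> psum x n \<le> t) \<or>
        (\<not> regular_stream x \<and> n = 0)}"
      by (simp only: cnt_eq vimage_def Int_def mem_Collect_eq singleton_iff conj_commute)
    also have "\<dots> \<in> sets Exp1_streams" by measurable
    finally show "(\<lambda>x. cnt (stream_points x) t) -` {n} \<inter> space Exp1_streams \<in> sets Exp1_streams" .
  qed auto
qed

lemma poisson_eq_stream_points: "poisson = distr Exp1_streams Nspace stream_points"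
proof -
  have "distr Exp1_streams Nspace stream_points =
      distr (\<Pi>\<^sub>M i\<in>UNIV. Exp1) Nspace (stream_points \<circ> to_stream)"
    by (subst stream_space_eq_distr) (rule distr_distr; measurable)
  also have "stream_points \<circ> to_stream = arrivals"
  proof
    fix X :: "nat \<Rightarrow> real"
    have "snth (to_stream X) = X" by (auto simp: to_stream_def fun_eq_iff)
    then show "(stream_points \<circ> to_stream) X = arrivals X" by (simp add: stream_points_def)
  qed
  finally show ?thesis unfolding poisson_def Exp1_def by simp
qed

lemma AE_Exp1_pos: "AE x in Exp1. 0 < x"
proof -
  have "AE x in lborel. x \<noteq> (0::real)" by (rule AE_lborel_singleton)
  then have "AE x in lborel. 0 < exponential_density 1 x \<longrightarrow> 0 < x"
    by eventually_elim (auto simp: exponential_density_def)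
  then show ?thesis unfolding Exp1_def by (subst AE_density) auto
qed

lemma AE_sdrop:
  assumes [measurable]: "Measurable.pred Exp1_streams P" and "AE x in Exp1_streams. P x"
  shows "AE x in Exp1_streams. P (sdrop m x)"
  using assms(2)
proof (induction m)
  case (Suc m)
  interpret Exp1: prob_space Exp1 by (rule prob_space_Exp1)
  show ?case
    by (subst Exp1.AE_stream_space) (use Suc in auto)
qed simp

lemma (in prob_space) emeasure_streams_eq_0:
  assumes A[measurable]: "A \<in> sets M" and p: "prob A < 1"
  shows "emeasure (stream_space M) (streams A) = 0"
proof -
  interpret S: prob_space "stream_space M" by (rule prob_space_stream_space)
  have sA[measurable]: "streams A \<in> sets (stream_space M)" by (rule streams_sets[OF A])
  have "emeasure (stream_space M) (streams A)
      = (\<integral>\<^sup>+t. indicator A t * emeasure (stream_space M) (streams A) \<partial>M)"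
    using sets.sets_into_space[OF A]
    by (subst emeasure_stream_space[OF sA])
       (auto intro!: nn_integral_cong arg_cong[where f="emeasure _"]
         simp: space_stream_space streams_Stream
         split: split_indicator intro: streams_mono)
  also have "\<dots> = emeasure M A * emeasure (stream_space M) (streams A)"
    by (subst nn_integral_multc) auto
  finally have "S.prob (streams A) = prob A * S.prob (streams A)"
    by (simp add: S.emeasure_eq_measure emeasure_eq_measure ennreal_mult'[symmetric])
  then have "(1 - prob A) * S.prob (streams A) = 0" by (simp add: algebra_simps)
  then show ?thesis using p by (simp add: S.emeasure_eq_measure)
qed

lemma distributed_Exp1: "distributed Exp1 lborel (\<lambda>x. x) (exponential_density 1)"
  unfolding distributed_def Exp1_def by (auto simp: distr_id2 exponential_density_def)

lemma measure_Exp1_atMost: "0 \<le> a \<Longrightarrow> measure Exp1 {..a} = 1 - exp (- a)"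
proof -
  interpret prob_space Exp1 by (rule prob_space_Exp1)
  assume "0 \<le> a"
  from exponential_distributedD_le[OF distributed_Exp1 this] show ?thesis
    by (simp add: atMost_def)
qed

lemma AE_Exp1_streams_ex_gt: "0 \<le> a \<Longrightarrow> AE x in Exp1_streams. \<exists>i. a < x !! i"
proof -
  interpret prob_space Exp1 by (rule prob_space_Exp1)
  assume "0 \<le> a"
  then have "emeasure Exp1_streams (streams {..a}) = 0"
    by (intro emeasure_streams_eq_0) (auto simp: measure_Exp1_atMost)
  then have "streams {..a} \<in> null_sets Exp1_streams"
    using streams_sets[of "{..a}" Exp1] by auto
  from AE_not_in[OF this] show ?thesis
    by eventually_elim (auto simp: streams_iff_snth not_le)
qed

lemma regular_streamI:
  assumes pos: "\<forall>i. 0 < x !! i" and large: "\<forall>m. \<exists>i. 1 < x !! (m + i)"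
  shows "regular_stream x"
proof -
  have "\<exists>n. real M \<le> psum x n" for M
  proof (induction M)
    case 0 then show ?case using psum_pos[OF pos] less_imp_le by auto
  next
    case (Suc M)
    then obtain n where n: "real M \<le> psum x n" by blast
    obtain i where i: "1 < x !! (Suc n + i)" using large by blast
    have "psum x n \<le> psum x (n + i)"
      using strict_mono_less_eq[OF strict_mono_psum[OF pos]] by simp
    then have "real (Suc M) \<le> psum x (Suc (n + i))" using n i psum_Suc[of x "n + i"] by simp
    then show ?case by blast
  qed
  then show ?thesis using pos unfolding regular_stream_def by blast
qed

lemma AE_regular_stream: "AE x in Exp1_streams. regular_stream x"
proof -
  interpret Exp1: prob_space Exp1 by (rule prob_space_Exp1)
  have "AE x in Exp1_streams. stream_all (\<lambda>x. 0 < x) x"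
    by (rule Exp1.AE_stream_all[OF _ AE_Exp1_pos]) simp
  then have pos: "AE x in Exp1_streams. \<forall>i. 0 < x !! i"
    by (rule eventually_mono) (simp add: stream_all_def)
  have "AE x in Exp1_streams. \<exists>i. 1 < sdrop m x !! i" for m
    by (rule AE_sdrop[OF _ AE_Exp1_streams_ex_gt]) auto
  then have "AE x in Exp1_streams. \<forall>m. \<exists>i. 1 < x !! (m + i)"
    by (subst AE_all_countable) (auto simp: sdrop_snth)
  with pos show ?thesis by eventually_elim (rule regular_streamI)
qed

abbreviation poisson_nonsingular :: "(real set \<Rightarrow> real set) \<Rightarrow> bool" where
  "poisson_nonsingular F \<equiv> absolutely_continuous poisson (distr poisson Nspace F)"

lemma poisson_nonsingularI:
  assumes F[measurable]: "F \<in> Nspace \<rightarrow>\<^sub>M Nspace"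
    and Phi: "\<Phi> \<in> Exp1_streams \<rightarrow>\<^sub>M Exp1_streams" "adapted \<Phi>" "null_preserving_coords \<Phi>"
      "AE X in Exp1_streams. \<exists>m. \<forall>n\<ge>m. \<Phi> X !! n = X !! n"
    and rel: "AE x in Exp1_streams. F (stream_points x) = stream_points (\<Phi> x)"
  shows "poisson_nonsingular F"
  unfolding absolutely_continuous_def
proof
  fix A assume A: "A \<in> null_sets poisson"
  then have [measurable]: "A \<in> sets Nspace" by (simp add: poisson_eq_stream_points null_sets_def)
  have notin_A: "{N \<in> space Nspace. N \<notin> A} \<in> sets Nspace" by measurable
  have F_notin_A: "{N \<in> space Nspace. F N \<notin> A} \<in> sets Nspace" by measurable
  note preds = notin_A[simplified] F_notin_A[simplified]
  have "AE N in poisson. N \<notin> A" by (rule AE_not_in[OF A])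
  then have "AE x in Exp1_streams. stream_points x \<notin> A"
    unfolding poisson_eq_stream_points by (subst (asm) AE_distr_iff) (auto simp: preds)
  then have "AE x in Exp1_streams. stream_points (\<Phi> x) \<notin> A"
    by (rule AE_adapted_transform[OF Phi, where P="\<lambda>x. stream_points x \<notin> A", rotated]) measurable
  with rel have "AE x in Exp1_streams. F (stream_points x) \<notin> A" by eventually_elim simp
  then have "AE N in poisson. F N \<notin> A"
    unfolding poisson_eq_stream_points by (subst AE_distr_iff) (auto simp: preds)
  then have "AE N in distr poisson Nspace F. N \<notin> A"
    by (subst AE_distr_iff) (auto simp: poisson_eq_stream_points preds)
  then show "A \<in> null_sets (distr poisson Nspace F)" by (subst AE_iff_null_sets) auto
qed

section \<open>Piecewise linear warps\<close>

definition warp :: "real \<Rightarrow> real \<Rightarrow> real \<Rightarrow> real \<Rightarrow> real" where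
  "warp a c d s = (if s \<le> a then s else if s \<le> a + d then a + c * (s - a) else s + (c - 1) * d)"

lemma measurable_warp[measurable]:
  assumes [measurable]: "a \<in> borel_measurable M" "c \<in> borel_measurable M" "d \<in> borel_measurable M"
    "s \<in> borel_measurable M"
  shows "(\<lambda>x. warp (a x) (c x) (d x) (s x)) \<in> borel_measurable M"
  unfolding warp_def by measurable

lemma warp_le: "s \<le> a \<Longrightarrow> warp a c d s = s"
  by (simp add: warp_def)

lemma warp_ge: "0 \<le> d \<Longrightarrow> a + d \<le> s \<Longrightarrow> warp a c d s = s + (c - 1) * d"
  by (auto simp: warp_def algebra_simps)

lemma warp_cases:
  assumes c: "0 < c" and d: "0 \<le> d"
  shows "u \<le> a \<Longrightarrow> warp a c d u = u"
    and "a < u \<Longrightarrow> u \<le> a + d \<Longrightarrow> a < warp a c d u \<and> warp a c d u \<le> a + c * d"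
    and "a + d < u \<Longrightarrow> warp a c d u = a + c * d + (u - a - d)"
proof -
  show "u \<le> a \<Longrightarrow> warp a c d u = u" by (simp add: warp_def)
  assume "a < u" "u \<le> a + d"
  then have "0 < c * (u - a)" "c * (u - a) \<le> c * d" using c by (simp, intro mult_left_mono, auto)
  then show "a < warp a c d u \<and> warp a c d u \<le> a + c * d" using \<open>a < u\<close> \<open>u \<le> a + d\<close>
    by (simp add: warp_def)
next
  assume "a + d < u"
  then show "warp a c d u = a + c * d + (u - a - d)" using d by (simp add: warp_def algebra_simps)
qed

lemma warp_gt: "0 < c \<Longrightarrow> 0 \<le> d \<Longrightarrow> a < s \<Longrightarrow> a < warp a c d s"
proof -
  assume c: "0 < c" and d: "0 \<le> d" and s: "a < s"
  have cd: "0 \<le> c * d" using c d by simp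
  show "a < warp a c d s"
  proof (cases "s \<le> a + d")
    case True then show ?thesis using warp_cases(2)[OF c d s] by simp
  next
    case False then show ?thesis using warp_cases(3)[OF c d, of a s] cd by simp
  qed
qed

lemma warp_less:
  assumes c: "0 < c" and d: "0 \<le> d" and st: "s < t"
  shows "warp a c d s < warp a c d t"
proof -
  have cd: "0 \<le> c * d" using c d by simp
  have mid: "warp a c d s < warp a c d t" if "a < s" "t \<le> a + d"
  proof -
    have "c * (s - a) < c * (t - a)" using c st by simp
    then show ?thesis using that st by (simp add: warp_def)
  qed
  consider "t \<le> a" | "s \<le> a" "a < t" | "a < s" "t \<le> a + d" | "a < s" "s \<le> a + d" "a + d < t"
    | "a + d < s"
    using st by linarith
  then show ?thesis
  proof cases
    case 1 then show ?thesis using st by (simp add: warp_def)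
  next
    case 2 then show ?thesis using warp_gt[OF c d 2(2)] warp_cases(1)[OF c d 2(1)] by simp
  next
    case 3 then show ?thesis by (rule mid)
  next
    case 4 then show ?thesis using warp_cases(2)[OF c d 4(1,2)] warp_cases(3)[OF c d 4(3)] by simp
  next
    case 5 then show ?thesis using warp_cases(3)[OF c d 5] warp_cases(3)[OF c d, of a t] st by simp
  qed
qed

lemma warp_mono: "0 < c \<Longrightarrow> 0 \<le> d \<Longrightarrow> s \<le> t \<Longrightarrow> warp a c d s \<le> warp a c d t"
  using warp_less[of c d s t a] by (cases "s = t") auto

lemma warp_inverse:
  assumes c: "0 < c" and d: "0 \<le> d"
  shows "warp a (1 / c) (c * d) (warp a c d s) = s"
proof -
  consider "s \<le> a" | "a < s" "s \<le> a + d" | "a + d < s" by linarith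
  then show ?thesis
  proof cases
    case 1 then show ?thesis by (simp add: warp_def)
  next
    case 2
    then have p: "warp a c d s = a + c * (s - a)" by (simp add: warp_def)
    have "a < a + c * (s - a)" using 2 c by simp
    moreover have "a + c * (s - a) \<le> a + c * d" using 2 c by simp
    ultimately show ?thesis unfolding p using c by (simp add: warp_def field_simps)
  next
    case 3
    then have p: "warp a c d s = s + (c - 1) * d" using d by (simp add: warp_def)
    have "a + c * d \<le> s + (c - 1) * d" using 3 by (simp add: algebra_simps)
    then have "warp a (1 / c) (c * d) (s + (c - 1) * d) = s + (c - 1) * d + (1 / c - 1) * (c * d)"
      by (intro warp_ge) (use c d in auto)
    also have "\<dots> = s" using c by (simp add: field_simps)
    finally show ?thesis unfolding p .
  qed
qed

lemma warp_inverse':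
  assumes c: "0 < c" and d: "0 \<le> d"
  shows "warp a c d (warp a (1 / c) (c * d) t) = t"
proof -
  have "warp a (1 / (1 / c)) ((1 / c) * (c * d)) (warp a (1 / c) (c * d) t) = t"
    by (rule warp_inverse) (use c d in auto)
  then show ?thesis using c by simp
qed

lemma warp_0: "0 \<le> a \<Longrightarrow> warp a c d 0 = 0"
  by (simp add: warp_def)

lemma time_change_warp: "0 \<le> a \<Longrightarrow> 0 < c \<Longrightarrow> 0 \<le> d \<Longrightarrow> time_change (warp a c d)"
  unfolding time_change_def
proof (intro conjI allI impI)
  assume a: "0 \<le> a" and c: "0 < c" and d: "0 \<le> d"
  show "warp a c d 0 = 0" by (rule warp_0[OF a])
  show "warp a c d s < warp a c d t" if "0 \<le> s" "s < t" for s t using warp_less[OF c d that(2)] .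
  fix y :: real assume y: "0 \<le> y"
  have c': "0 < 1 / c" "0 \<le> c * d" using c d by auto
  have "warp a (1 / c) (c * d) 0 \<le> warp a (1 / c) (c * d) y" by (rule warp_mono[OF c' y])
  then have "0 \<le> warp a (1 / c) (c * d) y" using warp_0[OF a] by simp
  then show "\<exists>s\<ge>0. warp a c d s = y" using warp_inverse'[OF c d] by blast
qed

lemma
  assumes N: "N \<in> nconf" and a: "0 \<le> a" and c: "0 < c" and d: "0 \<le> d"
  shows warp_image_nconf: "warp a c d ` N \<in> nconf"
    and cnt_warp_image: "cnt (warp a c d ` N) t = cnt N (warp a (1 / c) (c * d) t)"
proof -
  note h = time_change_warp[OF a c d]
  show "warp a c d ` N \<in> nconf" by (rule time_change_image_nconf[OF N h])
  show "cnt (warp a c d ` N) t = cnt N (warp a (1 / c) (c * d) t)"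
  proof (cases "0 \<le> t")
    case True
    have "0 \<le> warp a (1 / c) (c * d) t"
      by (rule time_change_nonneg[OF time_change_warp True]) (use a c d in auto)
    then have "cnt (warp a c d ` N) (warp a c d (warp a (1 / c) (c * d) t))
        = cnt N (warp a (1 / c) (c * d) t)"
      by (rule cnt_time_change_image[OF N h])
    then show ?thesis by (simp only: warp_inverse'[OF c d])
  next
    case False
    then have t: "t \<le> 0" by simp
    then have "warp a (1 / c) (c * d) t = t" using a by (intro warp_le) simp
    then show ?thesis using cnt_nonpos[OF t] by simp
  qed
qed

lemma null_preserving_warp_increment:
  assumes c: "0 < c" and d: "0 \<le> d"
  shows "null_preserving (\<lambda>v. warp a c d (p + v) - warp a c d p)"
proof (rule null_preservingI_piecewise_affine)
  let ?w = "warp a c d p"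
  show "finite {(p - ?w, 1), (a + c * (p - a) - ?w, c), (p + (c - 1) * d - ?w, 1)}" by simp
  show "0 \<le> warp a c d (p + v) - ?w" if "0 \<le> v" for v using warp_mono[OF c d, of p "p + v" a] that
    by simp
  show "\<exists>(\<kappa>, \<alpha>)\<in>{(p - ?w, 1), (a + c * (p - a) - ?w, c), (p + (c - 1) * d - ?w, 1)}.
      warp a c d (p + v) - ?w = \<kappa> + \<alpha> * v" for v
    unfolding warp_def[of a c d "p + v"] by (auto simp: algebra_simps)
qed (use c in \<open>auto intro: measurable_warp\<close>)

section \<open>Warping configurations\<close>

text \<open>The parameters \<open>c\<close>, \<open>d\<close> may depend on \<open>N\<close>, but only through \<open>stopped N a\<close>, which the
  warp leaves unchanged; this is what makes \<open>warp_conf\<close> invertible. The bound \<open>D\<close> on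
  \<open>d\<close> makes the induced transform of interarrival times eventually the identity.\<close>
definition warp_params :: "real \<Rightarrow> real \<Rightarrow> real \<Rightarrow> (real set \<Rightarrow> real) \<Rightarrow> (real set \<Rightarrow> real) \<Rightarrow> bool" where
  "warp_params a e D c d \<longleftrightarrow> 0 \<le> a \<and> 0 < e \<and> c \<in> borel_measurable Nspace \<and> d \<in> borel_measurable Nspace \<and>
     (\<forall>N\<in>nconf. e \<le> c N \<and> c N \<le> 1 / e \<and> 0 \<le> d N \<and> d N \<le> D \<and>
        c N = c (stopped N a) \<and> d N = d (stopped N a))"

definition warp_conf :: "real \<Rightarrow> (real set \<Rightarrow> real) \<Rightarrow> (real set \<Rightarrow> real) \<Rightarrow> real set \<Rightarrow> real set" where
  "warp_conf a c d N = warp a (c N) (d N) ` N"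

context
  fixes a e D :: real and c d :: "real set \<Rightarrow> real"
  assumes ok: "warp_params a e D c d"
begin

lemma warp_params_nonneg: "0 \<le> a" and warp_params_eps_pos: "0 < e"
  and warp_params_measurable[measurable]: "c \<in> borel_measurable Nspace" "d \<in> borel_measurable Nspace"
  using ok by (auto simp: warp_params_def)

lemma warp_params_bounds:
  assumes "N \<in> nconf"
  shows "e \<le> c N" "c N \<le> 1 / e" "0 < c N" "0 \<le> d N" "d N \<le> D"
  using ok assms by (auto simp: warp_params_def intro: less_le_trans[OF warp_params_eps_pos])

lemma warp_params_stopped:
  assumes "N \<in> nconf"
  shows "c (stopped N a) = c N" "d (stopped N a) = d N"
  using ok assms by (auto simp: warp_params_def)

lemma warp_conf_nconf: "N \<in> nconf \<Longrightarrow> warp_conf a c d N \<in> nconf"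
  unfolding warp_conf_def by (rule warp_image_nconf[OF _ warp_params_nonneg warp_params_bounds(3,4)])

lemma cnt_warp_conf: "N \<in> nconf \<Longrightarrow> cnt (warp_conf a c d N) t = cnt N (warp a (1 / c N) (c N * d N) t)"
  unfolding warp_conf_def by (rule cnt_warp_image[OF _ warp_params_nonneg warp_params_bounds(3,4)])

lemma measurable_warp_conf[measurable]: "warp_conf a c d \<in> Nspace \<rightarrow>\<^sub>M Nspace"
proof (rule measurable_NspaceI_cnt)
  show "warp_conf a c d x \<in> nconf" if "x \<in> space Nspace" for x using that warp_conf_nconf by simp
  fix t
  have "(\<lambda>N. cnt N (warp a (1 / c N) (c N * d N) t)) \<in> Nspace \<rightarrow>\<^sub>M count_space UNIV"
    by (rule measurable_cnt_comp[OF measurable_ident_sets[OF refl]]) measurable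
  then show "(\<lambda>N. cnt (warp_conf a c d N) t) \<in> Nspace \<rightarrow>\<^sub>M count_space UNIV"
    by (rule measurable_cong[THEN iffD1, rotated]) (simp add: cnt_warp_conf)
qed

lemma stopped_warp_conf: "N \<in> nconf \<Longrightarrow> stopped (warp_conf a c d N) a = stopped N a"
proof -
  assume N: "N \<in> nconf"
  have cd: "0 < c N" "0 \<le> d N" using warp_params_bounds[OF N] by auto
  show ?thesis unfolding stopped_def warp_conf_def
  proof (rule set_eqI)
    fix y
    show "y \<in> warp a (c N) (d N) ` N \<inter> {0<..a} \<longleftrightarrow> y \<in> N \<inter> {0<..a}"
    proof
      assume "y \<in> warp a (c N) (d N) ` N \<inter> {0<..a}"
      then obtain p where p: "p \<in> N" "y = warp a (c N) (d N) p" "0 < y" "y \<le> a" by auto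
      have "p \<le> a" using warp_gt[OF cd, of a p] p by (cases "p \<le> a") auto
      then show "y \<in> N \<inter> {0<..a}" using p warp_le by auto
    next
      assume "y \<in> N \<inter> {0<..a}"
      then show "y \<in> warp a (c N) (d N) ` N \<inter> {0<..a}"
        using warp_le[of y a "c N" "d N"] by (auto intro!: image_eqI[of y _ y])
    qed
  qed
qed

lemma warp_params_warp_conf: "N \<in> nconf \<Longrightarrow> c (warp_conf a c d N) = c N \<and> d (warp_conf a c d N) = d N"
  using warp_params_stopped[OF warp_conf_nconf] warp_params_stopped stopped_warp_conf by metis

lemma warp_conf_inverse: "N \<in> nconf \<Longrightarrow> warp_conf a (\<lambda>N. 1 / c N) (\<lambda>N. c N * d N) (warp_conf a c d N) = N"
proof -
  assume N: "N \<in> nconf"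
  have cd: "0 < c N" "0 \<le> d N" using warp_params_bounds[OF N] by auto
  have p: "c (warp_conf a c d N) = c N" "d (warp_conf a c d N) = d N"
    using warp_params_warp_conf[OF N] by auto
  have "warp_conf a (\<lambda>N. 1 / c N) (\<lambda>N. c N * d N) (warp_conf a c d N)
      = warp a (1 / c N) (c N * d N) ` warp_conf a c d N"
    by (simp only: warp_conf_def[of a "\<lambda>N. 1 / c N" "\<lambda>N. c N * d N" "warp_conf a c d N"] p)
  also have "\<dots> = N" unfolding warp_conf_def image_image warp_inverse[OF cd] by simp
  finally show ?thesis .
qed

lemma warp_params_inverse: "warp_params a e (D / e) (\<lambda>N. 1 / c N) (\<lambda>N. c N * d N)"
  unfolding warp_params_def
proof (intro conjI ballI)
  show "0 \<le> a" "0 < e" by (rule warp_params_nonneg, rule warp_params_eps_pos)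
  show "(\<lambda>N. 1 / c N) \<in> borel_measurable Nspace" "(\<lambda>N. c N * d N) \<in> borel_measurable Nspace"
    by measurable
  fix N assume N: "N \<in> nconf"
  note h = warp_params_bounds[OF N]
  have e: "0 < e" by (rule warp_params_eps_pos)
  have c1: "e \<le> c N" "c N \<le> 1 / e" "0 < c N" using h by auto
  show "e \<le> 1 / c N" using c1 e by (simp add: field_simps)
  show "1 / c N \<le> 1 / e" using c1 e by (simp add: field_simps)
  show "0 \<le> c N * d N" using h by simp
  have "c N * d N \<le> (1 / e) * D" by (rule mult_mono) (use h e in auto)
  then show "c N * d N \<le> D / e" by simp
  show "1 / c N = 1 / c (stopped N a)" "c N * d N = c (stopped N a) * d (stopped N a)"
    using warp_params_stopped[OF N] by auto
qed

end

lemma warp_conf_cong: "c N = c' N \<Longrightarrow> d N = d' N \<Longrightarrow> warp_conf a c d N = warp_conf a c' d' N"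
  by (simp add: warp_conf_def)

lemma warp_conf_inverse':
  assumes ok: "warp_params a e D c d" and N: "N \<in> nconf"
  shows "warp_conf a c d (warp_conf a (\<lambda>N. 1 / c N) (\<lambda>N. c N * d N) N) = N"
proof -
  note ok' = warp_params_inverse[OF ok]
  let ?M = "warp_conf a (\<lambda>N. 1 / c N) (\<lambda>N. c N * d N) N"
  have M: "?M \<in> nconf" by (rule warp_conf_nconf[OF ok' N])
  have "0 < c ?M" using warp_params_bounds[OF ok M] by simp
  then have "warp_conf a c d ?M = warp_conf a (\<lambda>N. 1 / (1 / c N)) (\<lambda>N. (1 / c N) * (c N * d N)) ?M"
    by (intro warp_conf_cong) auto
  also have "\<dots> = N" by (rule warp_conf_inverse[OF ok' N])
  finally show ?thesis .
qed

definition psum_before :: "real stream \<Rightarrow> nat \<Rightarrow> real" where "psum_before x n = (\<Sum>i<n. x !! i)"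

definition past_points :: "real stream \<Rightarrow> nat \<Rightarrow> real set" where
  "past_points x n = psum x ` {..<n} \<inter> {0<..}"

definition warp_increment ::
    "real \<Rightarrow> (real set \<Rightarrow> real) \<Rightarrow> (real set \<Rightarrow> real) \<Rightarrow> real set \<Rightarrow> real \<Rightarrow> real \<Rightarrow> real" where
  "warp_increment a c d C p v = warp a (c C) (d C) (p + v) - warp a (c C) (d C) p"

text \<open>The warp seen on interarrival times: the \<open>n\<close>-th increment is warped with the parameters
  read off from the points already placed, so that the resulting transform is adapted.\<close>
definition warp_stream ::
    "real \<Rightarrow> (real set \<Rightarrow> real) \<Rightarrow> (real set \<Rightarrow> real) \<Rightarrow> real stream \<Rightarrow> real stream" where
  "warp_stream a c d x =
     to_stream (\<lambda>n. warp_increment a c d (past_points x n) (psum_before x n) (x !! n))"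

lemma snth_to_stream: "to_stream f !! n = f n"
  by (simp add: to_stream_def)

lemma snth_warp_stream:
  "warp_stream a c d x !! n = warp_increment a c d (past_points x n) (psum_before x n) (x !! n)"
  by (simp add: warp_stream_def snth_to_stream)

lemma psum_before_Suc: "psum_before x (Suc n) = psum x n"
  by (simp add: psum_before_def psum_def lessThan_Suc_atMost)

lemma psum_before_0: "psum_before x 0 = 0" by (simp add: psum_before_def)

lemma psum_eq_psum_before: "psum x n = psum_before x n + x !! n"
  by (simp add: psum_before_def psum_def lessThan_Suc_atMost[symmetric])

lemma past_cong:
  assumes "\<And>j. j < n \<Longrightarrow> x !! j = y !! j"
  shows "psum_before x n = psum_before y n" "past_points x n = past_points y n"
proof -
  show "psum_before x n = psum_before y n" unfolding psum_before_def using assms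
    by (intro sum.cong) auto
  have "psum x j = psum y j" if "j < n" for j unfolding psum_def using assms that
    by (intro sum.cong) auto
  then show "past_points x n = past_points y n" unfolding past_points_def
    by (intro arg_cong2[where f="(\<inter>)"] image_cong) auto
qed

lemma past_points_nconf: "past_points x n \<in> nconf"
  unfolding past_points_def by (rule nconfI) (auto intro!: finite_Int disjI1)

lemma measurable_psum_before[measurable]: "(\<lambda>x. psum_before x n) \<in> borel_measurable Exp1_streams"
  unfolding psum_before_def by measurable

lemma measurable_past_points[measurable]: "(\<lambda>x. past_points x n) \<in> Exp1_streams \<rightarrow>\<^sub>M Nspace"
  unfolding past_points_def by (rule measurable_finite_points) measurable

lemma stopped_past_points:
  assumes g: "regular_stream x" and a: "a < psum x i"
  shows "stopped (past_points x i) a = stopped (stream_points x) a"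
proof -
  have sm: "strict_mono (psum x)" using g by (intro strict_mono_psum) (simp add: regular_stream_def)
  have "psum x j \<le> a \<Longrightarrow> j < i" for j using a strict_mono_less[OF sm, of j i] by linarith
  then show ?thesis unfolding stopped_def past_points_def stream_points_eq using g by auto
qed

context
  fixes a e D :: real and c d :: "real set \<Rightarrow> real"
  assumes ok: "warp_params a e D c d"
begin

lemma measurable_warp_stream: "warp_stream a c d \<in> Exp1_streams \<rightarrow>\<^sub>M Exp1_streams"
proof (rule measurable_stream_space2)
  fix n
  note [measurable] = warp_params_measurable[OF ok]
  have "(\<lambda>x. warp_increment a c d (past_points x n) (psum_before x n) (x !! n))
      \<in> borel_measurable Exp1_streams"
    unfolding warp_increment_def by measurable
  then show "(\<lambda>x. warp_stream a c d x !! n) \<in> Exp1_streams \<rightarrow>\<^sub>M Exp1"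
    by (simp add: snth_warp_stream measurable_cong_sets[OF refl sets_Exp1])
qed

lemma adapted_warp_stream: "adapted (warp_stream a c d)"
  unfolding adapted_def
proof (intro allI impI)
  fix n and x y :: "real stream" assume h: "stake n x = stake n y"
  have xy: "x !! j = y !! j" if "j < n" for j using arg_cong[OF h, of "\<lambda>l. l ! j"] that by simp
  have "warp_stream a c d x !! i = warp_stream a c d y !! i" if "i < n" for i
    unfolding snth_warp_stream using past_cong[of i x y] xy that by simp
  then show "stake n (warp_stream a c d x) = stake n (warp_stream a c d y)"
    by (intro nth_equalityI) auto
qed

lemma null_preserving_coords_warp_stream: "null_preserving_coords (warp_stream a c d)"
  unfolding null_preserving_coords_def
proof (intro allI)
  fix l :: "real list" and xs :: "real stream"
  define C where "C = past_points (l @- 0 ## xs) (length l)"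
  define p where "p = psum_before (l @- 0 ## xs) (length l)"
  have e: "warp_stream a c d (l @- v ## xs) !! length l = warp_increment a c d C p v" for v
  proof -
    have "(l @- v ## xs) !! j = (l @- 0 ## xs) !! j" if "j < length l" for j using that by simp
    then show ?thesis unfolding snth_warp_stream C_def p_def
      using past_cong[of "length l" "l @- v ## xs" "l @- 0 ## xs"]
      by simp
  qed
  have C: "C \<in> nconf" unfolding C_def by (rule past_points_nconf)
  show "null_preserving (\<lambda>v. warp_stream a c d (l @- v ## xs) !! length l)"
    unfolding e warp_increment_def
    by (rule null_preserving_warp_increment[OF warp_params_bounds(3,4)[OF ok C]])
qed

lemma warp_stream_eventually_id:
  assumes g: "regular_stream x" shows "\<exists>m. \<forall>n\<ge>m. warp_stream a c d x !! n = x !! n"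
proof -
  have pos: "\<forall>i. 0 < x !! i" using g unfolding regular_stream_def by simp
  have sm: "strict_mono (psum x)" by (rule strict_mono_psum[OF pos])
  obtain M :: nat where M: "a + D \<le> real M" using real_arch_simple by blast
  obtain n0 where n0: "real M \<le> psum x n0" using g unfolding regular_stream_def by blast
  have "warp_stream a c d x !! n = x !! n" if n: "Suc n0 \<le> n" for n
  proof -
    define C where "C = past_points x n"
    have C: "C \<in> nconf" unfolding C_def by (rule past_points_nconf)
    note h = warp_params_bounds[OF ok C]
    obtain k where k: "n = Suc k" "n0 \<le> k" using n by (cases n) auto
    have "psum x n0 \<le> psum x k" using strict_mono_less_eq[OF sm] k by simp
    then have p: "a + d C \<le> psum_before x n" using M n0 h(5) k by (simp add: psum_before_Suc)
    have v: "0 < x !! n" using pos by simp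
    show ?thesis unfolding snth_warp_stream warp_increment_def C_def[symmetric]
      using warp_ge[OF h(4) p] warp_ge[OF h(4), of a "psum_before x n + x !! n"] p v by simp
  qed
  then show ?thesis by blast
qed

lemma warp_past_points:
  assumes g: "regular_stream x" and s: "s \<le> psum x i"
  shows "warp a (c (past_points x i)) (d (past_points x i)) s
    = warp a (c (stream_points x)) (d (stream_points x)) s"
proof (cases "s \<le> a")
  case True then show ?thesis by (simp add: warp_le)
next
  case False
  then have st: "stopped (past_points x i) a = stopped (stream_points x) a"
    using s by (intro stopped_past_points[OF g]) simp
  have "c (past_points x i) = c (stream_points x)" "d (past_points x i) = d (stream_points x)"
    using warp_params_stopped[OF ok past_points_nconf] warp_params_stopped[OF ok stream_points_nconf] st
    by metis+
  then show ?thesis by simp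
qed

lemma snth_warp_stream_regular:
  assumes g: "regular_stream x"
  shows "warp_stream a c d x !! i = warp a (c (stream_points x)) (d (stream_points x)) (psum x i)
    - warp a (c (stream_points x)) (d (stream_points x)) (psum_before x i)"
proof -
  have pos: "\<forall>i. 0 < x !! i" using g unfolding regular_stream_def by simp
  then show ?thesis
    using warp_past_points[OF g, of "psum x i" i] warp_past_points[OF g, of "psum_before x i" i] pos
    unfolding snth_warp_stream warp_increment_def by (simp add: psum_eq_psum_before less_imp_le)
qed

lemma psum_warp_stream:
  assumes g: "regular_stream x"
  shows "psum (warp_stream a c d x) n = warp a (c (stream_points x)) (d (stream_points x)) (psum x n)"
proof -
  define f where "f = warp a (c (stream_points x)) (d (stream_points x))"
  have "psum (warp_stream a c d x) n = (\<Sum>i<Suc n. f (psum_before x (Suc i)) - f (psum_before x i))"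
    unfolding psum_def lessThan_Suc_atMost[symmetric]
    by (simp add: snth_warp_stream_regular[OF g] psum_before_Suc f_def)
  also have "\<dots> = f (psum_before x (Suc n)) - f (psum_before x 0)"
    by (rule sum_lessThan_telescope)
  also have "\<dots> = f (psum x n)"
    unfolding f_def using warp_params_nonneg[OF ok] by (simp add: psum_before_Suc psum_before_0 warp_0)
  finally show ?thesis unfolding f_def .
qed

lemma regular_warp_stream:
  assumes g: "regular_stream x"
  shows "regular_stream (warp_stream a c d x)"
  unfolding regular_stream_def
proof (intro conjI allI)
  define N where "N = stream_points x"
  note hN = warp_params_bounds[OF ok stream_points_nconf, of x, folded N_def]
  fix i
  have "psum_before x i < psum x i"
    using g psum_eq_psum_before[of x i] by (simp add: regular_stream_def)
  then show "0 < warp_stream a c d x !! i"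
    unfolding snth_warp_stream_regular[OF g, folded N_def] using warp_less[OF hN(3,4)] by simp
next
  define N where "N = stream_points x"
  note hN = warp_params_bounds[OF ok stream_points_nconf, of x, folded N_def]
  fix M :: nat
  have D0: "0 \<le> D" using hN(4,5) by linarith
  obtain M' :: nat where M': "real M + a + 2 * D \<le> real M'" using real_arch_simple by blast
  obtain n where n: "real M' \<le> psum x n" using g unfolding regular_stream_def by blast
  have "a + d N \<le> psum x n" using M' n hN(5) D0 warp_params_nonneg[OF ok] by linarith
  then have "warp a (c N) (d N) (psum x n) = psum x n + (c N - 1) * d N" by (rule warp_ge[OF hN(4)])
  moreover have "0 \<le> c N * d N" using hN(3,4) by simp
  ultimately have "real M \<le> warp a (c N) (d N) (psum x n)"
    using M' n hN(5) D0 warp_params_nonneg[OF ok] by (simp add: algebra_simps)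
  then show "\<exists>n. real M \<le> psum (warp_stream a c d x) n"
    unfolding psum_warp_stream[OF g, folded N_def] by blast
qed

lemma warp_conf_stream_points:
  assumes g: "regular_stream x"
  shows "warp_conf a c d (stream_points x) = stream_points (warp_stream a c d x)"
proof -
  have "stream_points (warp_stream a c d x) = range (psum (warp_stream a c d x))"
    by (simp add: stream_points_eq regular_warp_stream[OF g])
  also have "\<dots> = warp a (c (stream_points x)) (d (stream_points x)) ` range (psum x)"
    unfolding psum_warp_stream[OF g] by auto
  also have "\<dots> = warp_conf a c d (stream_points x)"
    unfolding warp_conf_def by (simp add: stream_points_eq g)
  finally show ?thesis by simp
qed

lemma poisson_nonsingular_warp_conf: "poisson_nonsingular (warp_conf a c d)"
proof (rule poisson_nonsingularI[OF measurable_warp_conf[OF ok] measurable_warp_stream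
      adapted_warp_stream null_preserving_coords_warp_stream])
  show "AE X in Exp1_streams. \<exists>m. \<forall>n\<ge>m. warp_stream a c d X !! n = X !! n"
    using AE_regular_stream by eventually_elim (rule warp_stream_eventually_id)
  show "AE x in Exp1_streams. warp_conf a c d (stream_points x) = stream_points (warp_stream a c d x)"
    using AE_regular_stream by eventually_elim (rule warp_conf_stream_points)
qed

end

section \<open>Inverse pairs of nonsingular maps\<close>

definition poisson_inverse_pair :: "(real set \<Rightarrow> real set) \<Rightarrow> (real set \<Rightarrow> real set) \<Rightarrow> bool" where
  "poisson_inverse_pair F G \<longleftrightarrow> F \<in> Nspace \<rightarrow>\<^sub>M Nspace \<and> G \<in> Nspace \<rightarrow>\<^sub>M Nspace \<and>
     (\<forall>N\<in>nconf. G (F N) = N \<and> F (G N) = N) \<and>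
     poisson_nonsingular F \<and>
     poisson_nonsingular G"

lemma space_poisson[simp]: "space poisson = nconf"
  by (simp add: poisson_eq_stream_points)

lemma sets_poisson[simp, measurable_cong]: "sets poisson = sets Nspace"
  by (simp add: poisson_eq_stream_points)

lemma measurable_poisson_iff[simp]: "F \<in> poisson \<rightarrow>\<^sub>M M \<longleftrightarrow> F \<in> Nspace \<rightarrow>\<^sub>M M"
  by (simp add: measurable_cong_sets[OF sets_poisson refl])

lemma null_sets_vimage_nonsingular:
  assumes F: "F \<in> Nspace \<rightarrow>\<^sub>M Nspace" and ac: "poisson_nonsingular F"
    and A: "A \<in> null_sets poisson"
  shows "F -` A \<inter> nconf \<in> null_sets poisson"
proof -
  have "A \<in> null_sets (distr poisson Nspace F)" using ac A unfolding absolutely_continuous_def by auto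
  then show ?thesis using F by (simp add: null_sets_distr_iff)
qed

lemma poisson_nonsingular_comp:
  assumes F: "F \<in> Nspace \<rightarrow>\<^sub>M Nspace" and G: "G \<in> Nspace \<rightarrow>\<^sub>M Nspace"
    and acF: "poisson_nonsingular F" and acG: "poisson_nonsingular G"
  shows "poisson_nonsingular (\<lambda>N. G (F N))"
  unfolding absolutely_continuous_def
proof
  fix A assume A: "A \<in> null_sets poisson"
  have "F -` (G -` A \<inter> nconf) \<inter> nconf \<in> null_sets poisson"
    by (intro null_sets_vimage_nonsingular[OF F acF] null_sets_vimage_nonsingular[OF G acG A])
  moreover have "F -` (G -` A \<inter> nconf) \<inter> nconf = (\<lambda>N. G (F N)) -` A \<inter> nconf"
    using measurable_space[OF F] by auto
  moreover have "(\<lambda>N. G (F N)) \<in> Nspace \<rightarrow>\<^sub>M Nspace" using measurable_comp[OF F G] by (simp add: comp_def)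
  moreover have "A \<in> sets Nspace" using A by (simp add: null_sets_def)
  ultimately show "A \<in> null_sets (distr poisson Nspace (\<lambda>N. G (F N)))"
    by (simp add: null_sets_distr_iff)
qed

lemma poisson_inverse_pair_comp:
  assumes "poisson_inverse_pair F G" "poisson_inverse_pair F' G'"
  shows "poisson_inverse_pair (\<lambda>N. F' (F N)) (\<lambda>N. G (G' N))"
proof -
  have F: "F \<in> Nspace \<rightarrow>\<^sub>M Nspace" and G: "G \<in> Nspace \<rightarrow>\<^sub>M Nspace"
    and F': "F' \<in> Nspace \<rightarrow>\<^sub>M Nspace" and G': "G' \<in> Nspace \<rightarrow>\<^sub>M Nspace"
    and inv: "\<And>N. N \<in> nconf \<Longrightarrow> G (F N) = N \<and> F (G N) = N"
    and inv': "\<And>N. N \<in> nconf \<Longrightarrow> G' (F' N) = N \<and> F' (G' N) = N"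
    and ac: "poisson_nonsingular F"
      "poisson_nonsingular G"
      "poisson_nonsingular F'"
      "poisson_nonsingular G'"
    using assms unfolding poisson_inverse_pair_def by auto
  have FN: "N \<in> nconf \<Longrightarrow> F N \<in> nconf" for N using measurable_space[OF F] by simp
  have GN: "N \<in> nconf \<Longrightarrow> G' N \<in> nconf" for N using measurable_space[OF G'] by simp
  show ?thesis unfolding poisson_inverse_pair_def
  proof (intro conjI ballI)
    show "(\<lambda>N. F' (F N)) \<in> Nspace \<rightarrow>\<^sub>M Nspace" using measurable_comp[OF F F'] by (simp add: comp_def)
    show "(\<lambda>N. G (G' N)) \<in> Nspace \<rightarrow>\<^sub>M Nspace" using measurable_comp[OF G' G] by (simp add: comp_def)
    fix N assume N: "N \<in> nconf"
    show "G (G' (F' (F N))) = N" using inv' [OF FN[OF N]] inv[OF N] by simp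
    show "F' (F (G (G' N))) = N" using inv[OF GN[OF N]] inv'[OF N] by simp
  next
    show "poisson_nonsingular (\<lambda>N. F' (F N))"
      by (rule poisson_nonsingular_comp[OF F F' ac(1) ac(3)])
    show "poisson_nonsingular (\<lambda>N. G (G' N))"
      by (rule poisson_nonsingular_comp[OF G' G ac(4) ac(2)])
  qed
qed

lemma poisson_inverse_pair_cong:
  assumes "poisson_inverse_pair F G" and eq: "\<And>N. N \<in> nconf \<Longrightarrow> F' N = F N"
  shows "poisson_inverse_pair F' G"
proof -
  have F: "F \<in> Nspace \<rightarrow>\<^sub>M Nspace" and G: "G \<in> Nspace \<rightarrow>\<^sub>M Nspace"
    and inv: "\<And>N. N \<in> nconf \<Longrightarrow> G (F N) = N \<and> F (G N) = N"
    and ac: "poisson_nonsingular F"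
      "poisson_nonsingular G"
    using assms unfolding poisson_inverse_pair_def by auto
  have GN: "N \<in> nconf \<Longrightarrow> G N \<in> nconf" for N using measurable_space[OF G] by simp
  have F': "F' \<in> Nspace \<rightarrow>\<^sub>M Nspace" using F
    by (rule measurable_cong[THEN iffD1, rotated]) (simp add: eq)
  have "distr poisson Nspace F' = distr poisson Nspace F" by (rule distr_cong) (auto simp: eq)
  then show ?thesis unfolding poisson_inverse_pair_def using F' G inv ac eq GN by auto
qed

lemma invertible_if_poisson_inverse_pair:
  assumes "poisson_inverse_pair F G" shows "invertible F"
proof -
  have F: "F \<in> Nspace \<rightarrow>\<^sub>M Nspace" and G: "G \<in> Nspace \<rightarrow>\<^sub>M Nspace"
    and inv: "\<And>N. N \<in> nconf \<Longrightarrow> G (F N) = N \<and> F (G N) = N"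
    and ac: "poisson_nonsingular F"
      "poisson_nonsingular G"
    using assms unfolding poisson_inverse_pair_def by auto
  have "AE N in poisson. G (F N) = N" by (rule AE_I2) (simp add: inv)
  moreover have "AE N in poisson. F (G N) = N" by (rule AE_I2) (simp add: inv)
  ultimately show ?thesis
    unfolding invertible_def left_invertible_def right_invertible_def using F G ac by blast
qed

lemma poisson_inverse_pair_warp_conf:
  assumes ok: "warp_params a e D c d"
  shows "poisson_inverse_pair (warp_conf a c d) (warp_conf a (\<lambda>N. 1 / c N) (\<lambda>N. c N * d N))"
  unfolding poisson_inverse_pair_def
  using measurable_warp_conf[OF ok] measurable_warp_conf[OF warp_params_inverse[OF ok]]
    warp_conf_inverse[OF ok] warp_conf_inverse'[OF ok]
    poisson_nonsingular_warp_conf[OF ok] poisson_nonsingular_warp_conf[OF warp_params_inverse[OF ok]]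
  by auto

section \<open>The time change as a composition of warps\<close>

definition overlap :: "real \<Rightarrow> real \<Rightarrow> real \<Rightarrow> real" where "overlap a b s = max 0 (min b s - a)"

lemma has_integral_indicator_Int:
  assumes a: "0 \<le> a" and s: "0 \<le> s" and hi: "hi = min b s" and ab: "a \<le> b"
    and A: "A \<inter> {0..s} = {a<..hi} \<or> (s \<le> a \<and> A \<inter> {0..s} = {})"
  shows "(indicator A has_integral max 0 (hi - a)) {0..s::real}"
proof -
  have e: "indicator A = (\<lambda>x. if x \<in> A then (1::real) else 0)" by (auto simp: indicator_def)
  have "((\<lambda>x. 1::real) has_integral max 0 (hi - a)) (A \<inter> {0..s})"
  proof (cases "s \<le> a")
    case True
    then have "A \<inter> {0..s} = {}" using A hi by auto
    moreover have "max 0 (hi - a) = 0" using True hi by simp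
    ultimately show ?thesis by simp
  next
    case False
    then have Sx: "A \<inter> {0..s} = {a<..hi}" using A by auto
    have ahi: "a \<le> hi" using False hi ab by simp
    have "((\<lambda>x. 1::real) has_integral (hi - a)) {a..hi}"
      using has_integral_const_real[of "1::real" a hi] ahi by simp
    moreover have "((\<lambda>x. 1::real) has_integral (hi - a)) {a..hi} \<longleftrightarrow>
        ((\<lambda>x. 1::real) has_integral (hi - a)) {a<..hi}"
      by (rule has_integral_spike_set_eq) (auto intro: negligible_subset[of "{a}"])
    ultimately show ?thesis unfolding Sx using ahi by simp
  qed
  then show ?thesis unfolding e by (subst has_integral_restrict_Int)
qed

lemma has_integral_indicator_Ioc:
  assumes "0 \<le> a" "a \<le> b" "0 \<le> s"
  shows "(indicator {a<..b} has_integral overlap a b s) {0..s::real}"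
  unfolding overlap_def
  by (rule has_integral_indicator_Int[OF assms(1,3) refl assms(2)]) (use assms in auto)

lemma has_integral_indicator_Ioi:
  assumes "0 \<le> a" "0 \<le> s"
  shows "(indicator {a<..} has_integral max 0 (s - a)) {0..s::real}"
proof -
  have "(indicator {a<..} has_integral max 0 (min (max a s) s - a)) {0..s::real}"
    by (rule has_integral_indicator_Int[OF assms(1,2) refl]) (use assms in auto)
  moreover have "max 0 (min (max a s) s - a) = max 0 (s - a)" by auto
  ultimately show ?thesis by simp
qed

definition ytime_closed ::
    "(nat \<Rightarrow> real) \<Rightarrow> nat \<Rightarrow> real \<Rightarrow> (nat \<Rightarrow> real set \<Rightarrow> real) \<Rightarrow> real set \<Rightarrow> real \<Rightarrow> real" where
  "ytime_closed tt K a0 al N s = a0 * overlap 0 (tt 1) s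
     + (\<Sum>j\<in>{1..<K}. al j (stopped N (tt j)) * overlap (tt j) (tt (Suc j)) s) + max 0 (s - tt K)"

definition increasing_grid :: "(nat \<Rightarrow> real) \<Rightarrow> nat \<Rightarrow> bool" where
  "increasing_grid tt K \<longleftrightarrow> tt 0 = 0 \<and> (\<forall>i<K. tt i < tt (Suc i))"

lemma increasing_grid_mono: "increasing_grid tt K \<Longrightarrow> i \<le> j \<Longrightarrow> j \<le> K \<Longrightarrow> tt i \<le> tt j"
proof (induction j)
  case 0 then show ?case by simp
next
  case (Suc j)
  show ?case
  proof (cases "i = Suc j")
    case False
    then have "tt i \<le> tt j" using Suc by simp
    moreover have "tt j < tt (Suc j)" using Suc.prems unfolding increasing_grid_def by simp
    ultimately show ?thesis by simp
  qed simp
qed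

lemma increasing_grid_nonneg: "increasing_grid tt K \<Longrightarrow> j \<le> K \<Longrightarrow> 0 \<le> tt j"
  using increasing_grid_mono[of tt K 0 j] by (simp add: increasing_grid_def)

lemma increasing_grid_le: "increasing_grid tt K \<Longrightarrow> K' \<le> K \<Longrightarrow> increasing_grid tt K'"
  by (auto simp: increasing_grid_def)

lemma ytime_eq_closed:
  assumes tt: "increasing_grid tt K" and K: "1 \<le> K" and s: "0 \<le> s"
  shows "ytime tt K a0 al N s = ytime_closed tt K a0 al N s"
proof -
  have le: "i \<le> j \<Longrightarrow> j \<le> K \<Longrightarrow> tt i \<le> tt j" for i j by (rule increasing_grid_mono[OF tt])
  have nn: "j \<le> K \<Longrightarrow> 0 \<le> tt j" for j by (rule increasing_grid_nonneg[OF tt])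
  have t0: "tt 0 = 0" using tt by (simp add: increasing_grid_def)
  have i1: "(indicator {0<..tt 1} has_integral overlap 0 (tt 1) s) {0..s}"
    by (rule has_integral_indicator_Ioc) (use le[of 0 1] K s t0 in auto)
  have i2: "((\<lambda>x. \<Sum>j\<in>{1..<K}. al j (stopped N (tt j)) * indicator {tt j<..tt (Suc j)} x) has_integral
      (\<Sum>j\<in>{1..<K}. al j (stopped N (tt j)) * overlap (tt j) (tt (Suc j)) s)) {0..s}"
  proof (rule has_integral_sum)
    fix j assume j: "j \<in> {1..<K}"
    show "((\<lambda>x. al j (stopped N (tt j)) * indicator {tt j<..tt (Suc j)} x) has_integral
        al j (stopped N (tt j)) * overlap (tt j) (tt (Suc j)) s) {0..s}"
      by (rule has_integral_mult_right, rule has_integral_indicator_Ioc)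
        (use j nn le[of j "Suc j"] s in auto)
  qed simp
  have i3: "(indicator {tt K<..} has_integral max 0 (s - tt K)) {0..s}"
    by (rule has_integral_indicator_Ioi) (use nn s in auto)
  have "(ydot tt K a0 al N has_integral ytime_closed tt K a0 al N s) {0..s}"
    unfolding ydot_def[abs_def] ytime_closed_def
    by (intro has_integral_add has_integral_mult_right i1 i2 i3)
  then show ?thesis unfolding ytime_def by (rule integral_unique)
qed

lemma Ymap_eq_image:
  assumes tt: "increasing_grid tt K" and K: "1 \<le> K" and N: "N \<in> nconf"
    and h: "time_change (ytime_closed tt K a0 al N)"
  shows "Ymap tt K a0 al N = ytime_closed tt K a0 al N ` N"
proof -
  have "ystar tt K a0 al N t = Inf {s. 0 \<le> s \<and> ytime_closed tt K a0 al N s > t}" for t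
    unfolding ystar_def using ytime_eq_closed[OF tt K] by (intro arg_cong[where f=Inf]) auto
  then show ?thesis unfolding Ymap_def using conf_of_time_change[OF N h] by simp
qed

lemma overlap_warp_below:
  assumes "0 \<le> lo" "lo \<le> hi" "hi \<le> a" "0 < c" "0 \<le> d"
  shows "overlap lo hi (warp a c d s) = overlap lo hi s"
proof (cases "s \<le> a")
  case True then show ?thesis by (simp add: warp_le)
next
  case False
  then have "a < warp a c d s" using warp_gt[of c d a s] assms by simp
  then have "min hi (warp a c d s) = hi" "min hi s = hi" using False assms by auto
  then show ?thesis unfolding overlap_def by simp
qed

lemma overlap_warp_top:
  assumes c: "0 < c" and d: "0 \<le> d"
  shows "max 0 (warp a c d s - a) = c * overlap a (a + d) s + max 0 (s - (a + d))"
proof -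
  consider "s \<le> a" | "a < s" "s \<le> a + d" | "a + d < s" by linarith
  then show ?thesis
  proof cases
    case 1
    have p: "warp a c d s = s" using 1 by (rule warp_le)
    have "min (a + d) s \<le> a" using 1 by simp
    then have o: "overlap a (a + d) s = 0" unfolding overlap_def by simp
    have m1: "max 0 (s - a) = 0" using 1 by simp
    have m2: "max 0 (s - (a + d)) = 0" using 1 d by simp
    show ?thesis unfolding p o m1 m2 by simp
  next
    case 2
    have p: "warp a c d s = a + c * (s - a)" using 2 by (simp add: warp_def)
    have o: "overlap a (a + d) s = s - a" unfolding overlap_def using 2 by simp
    have "0 \<le> c * (s - a)" using 2 c by simp
    then have m1: "max 0 (a + c * (s - a) - a) = c * (s - a)" by simp
    have m2: "max 0 (s - (a + d)) = 0" using 2 by simp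
    show ?thesis unfolding p o m1 m2 by simp
  next
    case 3
    have p: "warp a c d s = s + (c - 1) * d" using 3 d by (simp add: warp_def)
    have o: "overlap a (a + d) s = d" unfolding overlap_def using 3 d by simp
    have cd: "0 \<le> c * d" using c d by simp
    have m2: "max 0 (s - (a + d)) = s - (a + d)" using 3 by simp
    have e: "s + (c - 1) * d - a = c * d + (s - (a + d))" by (simp add: algebra_simps)
    have m1: "max 0 (s + (c - 1) * d - a) = c * d + (s - (a + d))" unfolding e using cd 3 by simp
    show ?thesis unfolding p o m1 m2 by simp
  qed
qed

lemma ytime_closed_one:
  assumes tt: "increasing_grid tt 1" and a0: "0 < a0" and s: "0 \<le> s"
  shows "ytime_closed tt 1 a0 al N s = warp 0 a0 (tt 1) s"
proof -
  have t1: "0 \<le> tt 1" using increasing_grid_nonneg[OF tt, of 1] by simp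
  have "max 0 (warp 0 a0 (tt 1) s - 0) = a0 * overlap 0 (0 + tt 1) s + max 0 (s - (0 + tt 1))"
    by (rule overlap_warp_top[OF a0 t1])
  moreover have "0 \<le> warp 0 a0 (tt 1) s" using warp_mono[OF a0 t1 s, of 0] warp_0[of 0] by simp
  ultimately show ?thesis unfolding ytime_closed_def by simp
qed

lemma ytime_closed_stopped_cong:
  assumes "\<And>j. 1 \<le> j \<Longrightarrow> j < K \<Longrightarrow> stopped M (tt j) = stopped N (tt j)"
  shows "ytime_closed tt K a0 al M = ytime_closed tt K a0 al N"
proof
  fix s
  have "(\<Sum>j\<in>{1..<K}. al j (stopped M (tt j)) * overlap (tt j) (tt (Suc j)) s) =
      (\<Sum>j\<in>{1..<K}. al j (stopped N (tt j)) * overlap (tt j) (tt (Suc j)) s)"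
    using assms by (intro sum.cong) auto
  then show "ytime_closed tt K a0 al M s = ytime_closed tt K a0 al N s"
    unfolding ytime_closed_def by simp
qed

lemma ytime_closed_Suc:
  assumes tt: "increasing_grid tt (Suc K)" and K: "1 \<le> K" and s: "0 \<le> s"
    and c: "0 < al K (stopped N (tt K))"
  shows "ytime_closed tt (Suc K) a0 al N s =
    ytime_closed tt K a0 al N (warp (tt K) (al K (stopped N (tt K))) (tt (Suc K) - tt K) s)"
proof -
  define a where "a = tt K"
  define c where "c = al K (stopped N (tt K))"
  define d where "d = tt (Suc K) - tt K"
  have c0: "0 < c" using c unfolding c_def .
  have d0: "0 \<le> d" using tt unfolding d_def increasing_grid_def by (auto intro: less_imp_le)
  have le: "i \<le> j \<Longrightarrow> j \<le> Suc K \<Longrightarrow> tt i \<le> tt j" for i j by (rule increasing_grid_mono[OF tt])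
  have nn: "j \<le> Suc K \<Longrightarrow> 0 \<le> tt j" for j by (rule increasing_grid_nonneg[OF tt])
  let ?p = "warp a c d s"
  have below: "overlap (tt j) (tt (Suc j)) ?p = overlap (tt j) (tt (Suc j)) s" if "j < K" for j
    by (rule overlap_warp_below)
      (use that nn[of j] le[of j "Suc j"] le[of "Suc j" K] c0 d0 in \<open>auto simp: a_def\<close>)
  have top: "max 0 (?p - a) = c * overlap a (tt (Suc K)) s + max 0 (s - tt (Suc K))"
    using overlap_warp_top[OF c0 d0, of a s] unfolding a_def d_def by simp
  have t0: "tt 0 = 0" using tt by (simp add: increasing_grid_def)
  have sum_below: "(\<Sum>j\<in>{1..<K}. al j (stopped N (tt j)) * overlap (tt j) (tt (Suc j)) ?p) =
      (\<Sum>j\<in>{1..<K}. al j (stopped N (tt j)) * overlap (tt j) (tt (Suc j)) s)"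
    by (intro sum.cong) (auto simp: below)
  have "{1..<Suc K} = insert K {1..<K}" using K by auto
  then have "ytime_closed tt (Suc K) a0 al N s = a0 * overlap 0 (tt 1) s
      + (\<Sum>j\<in>{1..<K}. al j (stopped N (tt j)) * overlap (tt j) (tt (Suc j)) s)
      + c * overlap a (tt (Suc K)) s + max 0 (s - tt (Suc K))"
    unfolding ytime_closed_def c_def a_def by simp
  also have "\<dots> = ytime_closed tt K a0 al N ?p"
    unfolding ytime_closed_def sum_below using top below[of 0] K t0 by (simp add: a_def)
  finally show ?thesis unfolding a_def c_def d_def .
qed

locale piecewise_rate =
  fixes tt :: "nat \<Rightarrow> real" and k :: nat and \<epsilon> a0 :: real and al :: "nat \<Rightarrow> real set \<Rightarrow> real"
  assumes grid: "increasing_grid tt k" and eps_pos: "0 < \<epsilon>"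
    and a0_bounds: "\<epsilon> \<le> a0" "a0 \<le> 1 / \<epsilon>"
    and al_measurable: "\<And>j. 1 \<le> j \<Longrightarrow> j < k \<Longrightarrow> al j \<in> borel_measurable Nspace"
    and al_bounds: "\<And>j N. 1 \<le> j \<Longrightarrow> j < k \<Longrightarrow> N \<in> nconf \<Longrightarrow> \<epsilon> \<le> al j N \<and> al j N \<le> 1 / \<epsilon>"
begin

lemma a0_pos: "0 < a0"
  using eps_pos a0_bounds by linarith

lemma grid_le: "K \<le> k \<Longrightarrow> increasing_grid tt K"
  by (rule increasing_grid_le[OF grid])

lemma warp_params_Suc:
  assumes K: "1 \<le> K" "K < k"
  shows "warp_params (tt K) \<epsilon> (tt (Suc K) - tt K) (\<lambda>N. al K (stopped N (tt K))) (\<lambda>_. tt (Suc K) - tt K)"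
  unfolding warp_params_def
proof (intro conjI ballI)
  show "0 \<le> tt K" by (rule increasing_grid_nonneg[OF grid]) (use K in simp)
  show "0 < \<epsilon>" by (rule eps_pos)
  have [measurable]: "al K \<in> borel_measurable Nspace" by (rule al_measurable[OF K])
  show "(\<lambda>N. al K (stopped N (tt K))) \<in> borel_measurable Nspace" by measurable
  fix N assume N: "N \<in> nconf"
  show "\<epsilon> \<le> al K (stopped N (tt K))" "al K (stopped N (tt K)) \<le> 1 / \<epsilon>"
    using al_bounds[OF K stopped_nconf[OF N]] by auto
  show "0 \<le> tt (Suc K) - tt K" using grid K by (simp add: increasing_grid_def less_imp_le)
qed (auto simp: stopped_stopped)

lemma time_change_ytime_closed:
  "1 \<le> K \<Longrightarrow> K \<le> k \<Longrightarrow> N \<in> nconf \<Longrightarrow> time_change (ytime_closed tt K a0 al N)"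
proof (induction K)
  case (Suc K)
  show ?case
  proof (cases "K = 0")
    case True
    have grid1: "increasing_grid tt 1" using grid_le Suc.prems True by simp
    have "time_change (warp 0 a0 (tt 1))"
      by (rule time_change_warp) (use a0_pos increasing_grid_nonneg[OF grid1, of 1] in auto)
    then show ?thesis
      using ytime_closed_one[OF grid1 a0_pos] True by (auto intro: time_change_cong)
  next
    case False
    then have K: "1 \<le> K" "K < k" using Suc.prems by auto
    note ok = warp_params_Suc[OF K]
    have "time_change (\<lambda>s. ytime_closed tt K a0 al N
        (warp (tt K) (al K (stopped N (tt K))) (tt (Suc K) - tt K) s))"
      using Suc K warp_params_nonneg[OF ok] warp_params_bounds[OF ok Suc.prems(3)]
        by (intro time_change_comp[OF _ time_change_warp]) auto
    moreover have "ytime_closed tt (Suc K) a0 al N s =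
        ytime_closed tt K a0 al N (warp (tt K) (al K (stopped N (tt K))) (tt (Suc K) - tt K) s)"
      if "0 \<le> s" for s
      by (rule ytime_closed_Suc[OF grid_le _ that])
        (use Suc.prems K warp_params_bounds[OF ok Suc.prems(3)] in auto)
    ultimately show ?thesis by (rule time_change_cong)
  qed
qed simp

lemma Ymap_eq_image_ytime_closed:
  "1 \<le> K \<Longrightarrow> K \<le> k \<Longrightarrow> N \<in> nconf \<Longrightarrow> Ymap tt K a0 al N = ytime_closed tt K a0 al N ` N"
  by (rule Ymap_eq_image[OF grid_le]) (auto intro: time_change_ytime_closed)

lemma Ymap_one:
  assumes "1 \<le> k" "N \<in> nconf"
  shows "Ymap tt 1 a0 al N = warp_conf 0 (\<lambda>_. a0) (\<lambda>_. tt 1) N"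
proof -
  have "Ymap tt 1 a0 al N = ytime_closed tt 1 a0 al N ` N"
    by (rule Ymap_eq_image_ytime_closed) (use assms in auto)
  also have "\<dots> = warp 0 a0 (tt 1) ` N"
    using ytime_closed_one[OF grid_le[OF assms(1)] a0_pos] nconfD(1)[OF assms(2)]
    by (intro image_cong) auto
  finally show ?thesis by (simp add: warp_conf_def)
qed

text \<open>The first \<open>K\<close> pieces of the rate only look at \<open>N\<close> before \<open>tt K\<close>, which the warp
  on \<open>(tt K, tt (Suc K)]\<close> does not move; so adding a piece amounts to warping \<open>N\<close> first.\<close>
lemma Ymap_Suc:
  assumes K: "1 \<le> K" "K < k" and N: "N \<in> nconf"
  shows "Ymap tt (Suc K) a0 al N =
    Ymap tt K a0 al (warp_conf (tt K) (\<lambda>N. al K (stopped N (tt K))) (\<lambda>_. tt (Suc K) - tt K) N)"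
proof -
  note ok = warp_params_Suc[OF K]
  define M where "M = warp_conf (tt K) (\<lambda>N. al K (stopped N (tt K))) (\<lambda>_. tt (Suc K) - tt K) N"
  have M: "M \<in> nconf" unfolding M_def by (rule warp_conf_nconf[OF ok N])
  have "stopped M (tt j) = stopped N (tt j)" if "j \<le> K" for j
  proof -
    have le: "tt j \<le> tt K" by (rule increasing_grid_mono[OF grid that]) (use K in simp)
    show ?thesis
      using stopped_warp_conf[OF ok N] stopped_stopped[OF le, of M] stopped_stopped[OF le, of N]
      unfolding M_def by metis
  qed
  then have YM: "ytime_closed tt K a0 al M = ytime_closed tt K a0 al N"
    by (intro ytime_closed_stopped_cong) auto
  have M_eq: "M = warp (tt K) (al K (stopped N (tt K))) (tt (Suc K) - tt K) ` N"
    unfolding M_def warp_conf_def ..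
  have "Ymap tt (Suc K) a0 al N = ytime_closed tt (Suc K) a0 al N ` N"
    by (rule Ymap_eq_image_ytime_closed) (use K N in auto)
  also have "\<dots> = ytime_closed tt K a0 al N ` M"
    unfolding M_eq image_image using nconfD(1)[OF N] warp_params_bounds[OF ok N] K
    by (intro image_cong refl ytime_closed_Suc[OF grid_le]) auto
  also have "\<dots> = ytime_closed tt K a0 al M ` M"
    by (simp only: YM)
  also have "\<dots> = Ymap tt K a0 al M"
    by (rule Ymap_eq_image_ytime_closed[symmetric]) (use K M in auto)
  finally show ?thesis unfolding M_def .
qed

lemma poisson_inverse_pair_Ymap:
  "1 \<le> K \<Longrightarrow> K \<le> k \<Longrightarrow> \<exists>G. poisson_inverse_pair (Ymap tt K a0 al) G"
proof (induction K)
  case (Suc K)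
  show ?case
  proof (cases "K = 0")
    case True
    have "warp_params 0 \<epsilon> (tt 1) (\<lambda>_. a0) (\<lambda>_. tt 1)"
      unfolding warp_params_def using eps_pos a0_bounds increasing_grid_nonneg[OF grid, of 1] Suc.prems
      by auto
    from poisson_inverse_pair_warp_conf[OF this] have
      "poisson_inverse_pair (Ymap tt 1 a0 al) (warp_conf 0 (\<lambda>N. 1 / a0) (\<lambda>N. a0 * tt 1))"
      by (rule poisson_inverse_pair_cong) (use Ymap_one Suc.prems in auto)
    then show ?thesis using True by auto
  next
    case False
    then have K: "1 \<le> K" "K < k" using Suc.prems by auto
    then obtain G where "poisson_inverse_pair (Ymap tt K a0 al) G" using Suc.IH by auto
    from poisson_inverse_pair_comp[OF poisson_inverse_pair_warp_conf[OF warp_params_Suc[OF K]] this]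
    have "poisson_inverse_pair (Ymap tt (Suc K) a0 al) (\<lambda>N. warp_conf (tt K)
      (\<lambda>N. 1 / al K (stopped N (tt K))) (\<lambda>N. al K (stopped N (tt K)) * (tt (Suc K) - tt K)) (G N))"
      by (rule poisson_inverse_pair_cong) (use Ymap_Suc[OF K] in auto)
    then show ?thesis by blast
  qed
qed simp

end

theorem mainTheorem13:
  fixes tt :: "nat \<Rightarrow> real" and k :: nat and T \<epsilon> a0 :: real
    and al :: "nat \<Rightarrow> real set \<Rightarrow> real"
  assumes "1 \<le> k"
    and "tt 0 = 0" and "\<And>i. i < k \<Longrightarrow> tt i < tt (Suc i)" and "tt k = T"
    and "0 < \<epsilon>" and "\<epsilon> < 1"
    and "\<epsilon> \<le> a0" and "a0 \<le> 1 / \<epsilon>"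
    and "\<And>j. 1 \<le> j \<Longrightarrow> j < k \<Longrightarrow> al j \<in> borel_measurable Nspace"
    and "\<And>j N. 1 \<le> j \<Longrightarrow> j < k \<Longrightarrow> N \<in> nconf \<Longrightarrow> \<epsilon> \<le> al j N \<and> al j N \<le> 1 / \<epsilon>"
  shows "invertible (Ymap tt k a0 al)"
proof -
  interpret piecewise_rate tt k \<epsilon> a0 al
    using assms by unfold_locales (auto simp: increasing_grid_def)
  obtain G where "poisson_inverse_pair (Ymap tt k a0 al) G"
    using poisson_inverse_pair_Ymap[OF assms(1) order_refl] by blast
  then show ?thesis by (rule invertible_if_poisson_inverse_pair)
qed


end
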